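(* Let $\{\delta(c)\}_{c>0}$ be a family of decentralized sequential tests (not necessarily two-stage) with stopping times $N=N(c)$ and final decisions $D=D(c)$ such that, as $c\to0$, $\mathbf P_m\{D\neq m\}=O(c|\log c|)$ for every $m=0,\dots,M-1$. Then, as $c\to0$, for every $m=0,\dots,M-1$, $$\mathbf E_m\{N\}\ge\frac{|\log c|-\log|\log c|+O(1)}{I(m)}=(1+o(1))\frac{|\log c|}{I(m)}.$$
   Context: Setting: a single sensor observes raw data $X_1,X_2,\dots$ which, under state $m\in\{0,\dots,M-1\}$ (probability $\mathbf P_m$, expectation $\mathbf E_m$), are i.i.d. with density $f_m$ with respect to a common $\sigma$-finite measure. Standing assumption: for all $m\neq m'$, $0<\mathbf E_m[\log(f_m(X_1)/f_{m'}(X_1))]<\infty$. Sensor messages are binary, in $\{0,1\}$. A deterministic quantizer is a measurable map $\phi$ from the observation space to $\{0,1\}$; $\Phi$ is the set of these. A randomized quantizer $\bar\phi=\sum_j p^j\phi^j$ is a probability distribution $(p^j)$ on a countable set $\{\phi^j\}\subset\Phi$; deterministic quantizers are identified with randomized ones putting mass one on themselves; $\bar\Phi$ is the set of all quantizers. For $\phi\in\Phi$, $f_m(u;\phi)=\mathbf P_m(\phi(X_1)=u)$ and $I(m,m';\phi)=\sum_{u}f_m(u;\phi)\log\frac{f_m(u;\phi)}{f_{m'}(u;\phi)}$; for $\bar\phi=\sum_jp^j\phi^j$, $I(m,m';\bar\phi)=\sum_jp^jI(m,m';\phi^j)$; $I(m;\bar\phi)=\min_{m'\neq m}I(m,m';\bar\phi)$;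 and the maximin information number is $I(m)=\sup_{\bar\phi\in\bar\Phi}I(m;\bar\phi)$. Decentralized test: at each time $n$ the sensor sends $U_n=\tilde\phi_n(X_n)$, where the quantizer $\tilde\phi_n\in\bar\Phi$ (deterministic, or randomized with the randomization either revealed or not revealed to the fusion center) is determined by feedback from past messages $U_1,\dots,U_{n-1}$ (and possibly independent randomization). Let $\mathcal F_{n-1}$ be the $\sigma$-algebra generated by $U_1,\dots,U_{n-1}$ and the quantizers $\tilde\phi_1,\dots,\tilde\phi_n$ as known to the fusion center, so that conditionally on $\mathcal F_{n-1}$, under $\mathbf P_m$, $U_n$ has probability mass function $u\mapsto\mathbf P_m(\tilde\phi_n(X_n)=u)$. The test consists of a stopping time $N$ with respect to $(\mathcal F_n)$ and an $\mathcal F_N$-measurable final decision $D\in\{0,\dots,M-1\}$. *)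

theory Defs
  imports "HOL-Probability.Probability" "HOL-Library.Landau_Symbols"
begin

text \<open>Binary messages are modelled by bool (True = 1, False = 0).
  A deterministic quantizer is a measurable map from the observation space to bool.\<close>

type_synonym 'x quant = "'x \<Rightarrow> bool"

text \<open>A fusion-center history: the quantizers used so far (as known to the fusion
  center) together with the messages received.\<close>
type_synonym 'x hist = "('x quant \<times> bool) list"

text \<open>Fusion-center information after n messages: the history of length n and the
  quantizer to be used at the next step (F_n in the paper).\<close>
type_synonym 'x state = "'x hist \<times> 'x quant"

definition Qm :: "'x measure \<Rightarrow> (nat \<Rightarrow> 'x \<Rightarrow> real) \<Rightarrow> nat \<Rightarrow> 'x measure" where
  "Qm \<mu> f m = density \<mu> (\<lambda>x. ennreal (f m x))"

definition Phi :: "'x measure \<Rightarrow> 'x quant set" where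
  "Phi \<mu> = measurable \<mu> (count_space UNIV)"

definition qpmf :: "'x measure \<Rightarrow> (nat \<Rightarrow> 'x \<Rightarrow> real) \<Rightarrow> nat \<Rightarrow> 'x quant \<Rightarrow> bool \<Rightarrow> real" where
  "qpmf \<mu> f m \<phi> u = measure (Qm \<mu> f m) {x \<in> space \<mu>. \<phi> x = u}"

text \<open>I(m,m';phi) for a deterministic quantizer (convention 0 log(0/a) = 0).\<close>
definition Idet :: "'x measure \<Rightarrow> (nat \<Rightarrow> 'x \<Rightarrow> real) \<Rightarrow> nat \<Rightarrow> nat \<Rightarrow> 'x quant \<Rightarrow> real" where
  "Idet \<mu> f m m' \<phi> = (\<Sum>u\<in>(UNIV::bool set). qpmf \<mu> f m \<phi> u * ln (qpmf \<mu> f m \<phi> u / qpmf \<mu> f m' \<phi> u))"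

text \<open>Randomized quantizers: probability distributions with countable support (pmf)
  on deterministic quantizers; I(m,m';bar phi) = sum_j p^j I(m,m';phi^j).\<close>
definition Irand :: "'x measure \<Rightarrow> (nat \<Rightarrow> 'x \<Rightarrow> real) \<Rightarrow> nat \<Rightarrow> nat \<Rightarrow> 'x quant pmf \<Rightarrow> real" where
  "Irand \<mu> f m m' p = measure_pmf.expectation p (Idet \<mu> f m m')"

definition randomized_quantizers :: "'x measure \<Rightarrow> 'x quant pmf set" where
  "randomized_quantizers \<mu> = {p. set_pmf p \<subseteq> Phi \<mu>}"

definition Imin :: "nat \<Rightarrow> 'x measure \<Rightarrow> (nat \<Rightarrow> 'x \<Rightarrow> real) \<Rightarrow> nat \<Rightarrow> 'x quant pmf \<Rightarrow> real" where
  "Imin M \<mu> f m p = Min ((\<lambda>m'. Irand \<mu> f m m' p) ` {m'. m' < M \<and> m' \<noteq> m})"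

definition Imaximin :: "nat \<Rightarrow> 'x measure \<Rightarrow> (nat \<Rightarrow> 'x \<Rightarrow> real) \<Rightarrow> nat \<Rightarrow> real" where
  "Imaximin M \<mu> f m = (SUP p \<in> randomized_quantizers \<mu>. Imin M \<mu> f m p)"

text \<open>A decentralized test is given by a feedback policy pol (the law of the next
  deterministic quantizer given everything the fusion center knows; this covers
  deterministic feedback and randomization), a stopping rule stop and a decision
  rule dec, both functions of the fusion-center information.
  traj ... m n is the law under P_m of the fusion-center information after n messages:
  conditionally on it, U_{n+1} is Bernoulli with parameter P_m(phi(X)=1).\<close>
primrec traj :: "'x measure \<Rightarrow> (nat \<Rightarrow> 'x \<Rightarrow> real) \<Rightarrow> ('x hist \<Rightarrow> 'x quant pmf)
    \<Rightarrow> nat \<Rightarrow> nat \<Rightarrow> 'x state pmf" where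
  "traj \<mu> f pol m 0 = map_pmf (\<lambda>\<phi>. ([], \<phi>)) (pol [])"
| "traj \<mu> f pol m (Suc n) =
     bind_pmf (traj \<mu> f pol m n) (\<lambda>(h, \<phi>).
       bind_pmf (bernoulli_pmf (qpmf \<mu> f m \<phi> True)) (\<lambda>u.
         map_pmf (\<lambda>\<phi>'. (h @ [(\<phi>, u)], \<phi>')) (pol (h @ [(\<phi>, u)]))))"

text \<open>The information available after k messages, extracted from a later state.\<close>
definition prefix_state :: "nat \<Rightarrow> 'x state \<Rightarrow> 'x state" where
  "prefix_state k s = (take k (fst s), if k < length (fst s) then fst (fst s ! k) else snd s)"

text \<open>N = LEAST n. stop (information after n messages).\<close>
definition stopped_by :: "('x state \<Rightarrow> bool) \<Rightarrow> nat \<Rightarrow> 'x state \<Rightarrow> bool" where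
  "stopped_by stop n s = (\<exists>k\<le>n. stop (prefix_state k s))"

definition stops_at :: "('x state \<Rightarrow> bool) \<Rightarrow> nat \<Rightarrow> 'x state \<Rightarrow> bool" where
  "stops_at stop n s = (stop (prefix_state n s) \<and> (\<forall>k<n. \<not> stop (prefix_state k s)))"

text \<open>E_m[N] = sum_{n>=0} P_m(N > n)  (equals infinity if P_m(N = infinity) > 0).\<close>
definition expected_N :: "'x measure \<Rightarrow> (nat \<Rightarrow> 'x \<Rightarrow> real) \<Rightarrow> ('x hist \<Rightarrow> 'x quant pmf)
    \<Rightarrow> ('x state \<Rightarrow> bool) \<Rightarrow> nat \<Rightarrow> ennreal" where
  "expected_N \<mu> f pol stop m =
     (\<Sum>n. ennreal (measure_pmf.prob (traj \<mu> f pol m n) {s. \<not> stopped_by stop n s}))"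

definition error_prob :: "'x measure \<Rightarrow> (nat \<Rightarrow> 'x \<Rightarrow> real) \<Rightarrow> ('x hist \<Rightarrow> 'x quant pmf)
    \<Rightarrow> ('x state \<Rightarrow> bool) \<Rightarrow> ('x state \<Rightarrow> nat) \<Rightarrow> nat \<Rightarrow> real" where
  "error_prob \<mu> f pol stop dec m =
     (\<Sum>n. measure_pmf.prob (traj \<mu> f pol m n) {s. stops_at stop n s \<and> dec s \<noteq> m})"

end

(* Fix the true
   state m and a time n; the information at the fusion center at time min N n is a stopped
   message process whose laws under m and under m' differ by the likelihood ratio of the
   messages.  Their divergence D_n(m, m') satisfies
   (1) Wald's identity: D_n is the expected sum of the quantized informations I(m, m'; phi_k)
       over the steps before min N n; averaging the quantizers used gives a randomized
       quantizer, so for the m' hardest to tell from m, D_n <= E_m[min N n] I(m);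
   (2) data processing on the event "stopped and decided m": if all error probabilities are
       at most a and P_m(N > n) is small, then D_n >= ln(1/a) - 4.
   Hence E_m[N] >= (ln(1/a) - 4) / I(m), and a = K c |ln c| gives the theorem. *)

theory Submission
  imports Defs "HOL-Real_Asymp.Real_Asymp"
begin

subsection \<open>Elementary inequalities\<close>

lemma ln_ge_one_minus_inverse:
  fixes x :: real assumes "0 < x" shows "1 - 1 / x \<le> ln x"
proof -
  have "ln (1 / x) \<le> 1 / x - 1" using assms by (intro ln_le_minus_one) auto
  then show ?thesis using assms by (simp add: ln_div)
qed

lemma ln_tangent_lower:
  fixes r u :: real assumes "0 < r" "0 < u" shows "ln r + 1 - r / u \<le> ln u"
  using ln_ge_one_minus_inverse[of "u / r"] assms by (simp add: ln_div)

text \<open>The convex function generating the Kullback--Leibler divergence: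
  for a likelihood ratio L, the expectation of kl_fun L under the denominator law is
  the divergence of the numerator law.\<close>
definition kl_fun :: "real \<Rightarrow> real" where
  "kl_fun x = x * ln x - x + 1"

lemma kl_fun_tangent:
  fixes L r :: real assumes L: "0 \<le> L" and r: "0 < r"
  shows "kl_fun r + ln r * (L - r) \<le> kl_fun L"
proof (cases "L = 0")
  case False
  then have Lp: "0 < L" using L by simp
  have "L * (ln r + 1 - r / L) \<le> L * ln L"
    using Lp r by (intro mult_left_mono ln_tangent_lower) auto
  then show ?thesis using Lp by (simp add: kl_fun_def algebra_simps)
qed (use r in \<open>simp add: kl_fun_def\<close>)

lemma kl_fun_nonneg: "0 \<le> x \<Longrightarrow> 0 \<le> kl_fun x"
  using kl_fun_tangent[of x 1] by (simp add: kl_fun_def)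

text \<open>The contribution of one message value u (with probabilities a under the numerator
  and b under the denominator law) to the divergence after a step, starting from
  likelihood ratio L.\<close>
lemma kl_fun_scaled_ratio:
  fixes a b L :: real
  assumes a: "0 \<le> a" and b: "0 \<le> b" and ab: "b = 0 \<Longrightarrow> a = 0" and L: "0 \<le> L"
  shows "b * kl_fun (L * \<bar>a / b\<bar>) = L * a * ln L + L * a * ln (a / b) - L * a + b"
proof (cases "a = 0 \<or> L = 0")
  case True then show ?thesis by (auto simp: kl_fun_def)
next
  case False
  then have ap: "0 < a" and Lp: "0 < L" and bp: "0 < b" using a b ab L by force+
  have "ln (L * (a / b)) = ln L + ln (a / b)" using ap bp Lp by (intro ln_mult_pos) auto
  moreover have "b * kl_fun (L * \<bar>a / b\<bar>) = L * a * ln (L * (a / b)) - L * a + b"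
    using ap bp by (simp add: kl_fun_def algebra_simps)
  ultimately show ?thesis by (simp add: algebra_simps)
qed

lemma kl_fun_jensen_integrable:
  fixes Q :: "'a measure" and L :: "'a \<Rightarrow> real"
  assumes Q: "finite_measure Q" and S: "S \<in> sets Q" and L: "\<And>s. 0 \<le> L s"
    and L_int: "integrable Q (\<lambda>s. indicator S s * L s)"
    and kl_int: "integrable Q (\<lambda>s. indicator S s * kl_fun (L s))"
    and pS: "(\<integral>s. indicator S s * L s \<partial>Q) = pS" "0 < pS" and qS: "0 < measure Q S"
  shows "measure Q S * kl_fun (pS / measure Q S) \<le> (\<integral>s. indicator S s * kl_fun (L s) \<partial>Q)"
proof -
  interpret finite_measure Q by (rule Q)
  define qS where "qS = measure Q S"
  define r where "r = pS / qS"
  have r: "0 < r" and rq: "r * qS = pS" using pS qS by (auto simp: r_def qS_def)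
  have S_int: "integrable Q (indicator S :: 'a \<Rightarrow> real)"
    using S by (simp add: integrable_indicator_iff less_top[symmetric])
  have "(\<integral>s. indicator S s * (kl_fun r - ln r * r) + ln r * (indicator S s * L s) \<partial>Q)
      = qS * (kl_fun r - ln r * r) + ln r * pS"
    using S_int L_int S pS by (simp add: qS_def)
  then have "qS * kl_fun r = (\<integral>s. indicator S s * (kl_fun r - ln r * r) + ln r * (indicator S s * L s) \<partial>Q)"
    unfolding rq[symmetric] by (simp add: algebra_simps)
  also have "\<dots> \<le> (\<integral>s. indicator S s * kl_fun (L s) \<partial>Q)"
  proof (rule integral_mono[OF _ kl_int])
    show "integrable Q (\<lambda>s. indicator S s * (kl_fun r - ln r * r) + ln r * (indicator S s * L s))"
      using S_int L_int
        by (intro Bochner_Integration.integrable_add integrable_mult_left integrable_mult_right)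
    show "indicator S s * (kl_fun r - ln r * r) + ln r * (indicator S s * L s)
        \<le> indicator S s * kl_fun (L s)" for s
      using kl_fun_tangent[OF L r, of s] by (auto simp: indicator_def algebra_simps)
  qed
  finally show ?thesis by (simp add: qS_def r_def)
qed

lemma kl_fun_jensen_on_set:
  fixes Q :: "'a measure" and L :: "'a \<Rightarrow> real"
  assumes Q: "finite_measure Q" and S: "S \<in> sets Q"
    and L: "L \<in> borel_measurable Q" "\<And>s. 0 \<le> L s"
    and pS: "(\<integral>\<^sup>+ s. ennreal (indicator S s * L s) \<partial>Q) = ennreal pS" "0 < pS"
    and qS: "0 < measure Q S"
  shows "ennreal (pS * ln (pS / measure Q S) - pS + measure Q S)
           \<le> (\<integral>\<^sup>+ s. ennreal (indicator S s * kl_fun (L s)) \<partial>Q)" (is "_ \<le> ?D")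
proof (cases "?D = \<infinity>")
  case False
  have kl_meas: "(\<lambda>s. indicator S s * kl_fun (L s)) \<in> borel_measurable Q"
    unfolding kl_fun_def using L(1) S by measurable
  have kl_nonneg: "0 \<le> indicator S s * kl_fun (L s)" for s
    using kl_fun_nonneg[OF L(2)] by simp
  have kl_int: "integrable Q (\<lambda>s. indicator S s * kl_fun (L s))"
    using False kl_meas kl_nonneg by (intro integrableI_nonneg AE_I2) (auto simp: top.not_eq_extremum)
  have L_int: "integrable Q (\<lambda>s. indicator S s * L s)"
    using pS S L by (intro integrableI_nonneg) auto
  have "(\<integral>s. indicator S s * L s \<partial>Q) = pS"
    using nn_integral_eq_integral[OF L_int] pS L by simp
  note jensen = kl_fun_jensen_integrable[OF Q S L(2) L_int kl_int this pS(2) qS]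
  have "?D = ennreal (\<integral>s. indicator S s * kl_fun (L s) \<partial>Q)"
    using kl_int kl_nonneg by (intro nn_integral_eq_integral AE_I2) auto
  moreover have "measure Q S * kl_fun (pS / measure Q S) = pS * ln (pS / measure Q S) - pS + measure Q S"
    using qS by (simp add: kl_fun_def field_simps)
  ultimately show ?thesis using jensen by (simp add: ennreal_leI)
qed simp


subsection \<open>The message process and its stopped version\<close>

text \<open>Everything is parametrised by q, so that the laws of the process under different states
  can be compared.\<close>
definition step_kernel :: "('x quant \<Rightarrow> real) \<Rightarrow> ('x hist \<Rightarrow> 'x quant pmf) \<Rightarrow> 'x state \<Rightarrow> 'x state pmf" where
  "step_kernel q pol s = bind_pmf (bernoulli_pmf (q (snd s)))
     (\<lambda>u. map_pmf (\<lambda>\<phi>'. (fst s @ [(snd s, u)], \<phi>')) (pol (fst s @ [(snd s, u)])))"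

primrec traj_gen :: "('x quant \<Rightarrow> real) \<Rightarrow> ('x hist \<Rightarrow> 'x quant pmf) \<Rightarrow> nat \<Rightarrow> 'x state pmf" where
  "traj_gen q pol 0 = map_pmf (\<lambda>\<phi>. ([], \<phi>)) (pol [])"
| "traj_gen q pol (Suc n) = bind_pmf (traj_gen q pol n) (step_kernel q pol)"

text \<open>The process frozen at the first state satisfying stop: its law at time n is the law
  of the fusion-center information at time min N n.\<close>
primrec traj_stopped :: "('x quant \<Rightarrow> real) \<Rightarrow> ('x hist \<Rightarrow> 'x quant pmf) \<Rightarrow> ('x state \<Rightarrow> bool)
    \<Rightarrow> nat \<Rightarrow> 'x state pmf" where
  "traj_stopped q pol stop 0 = map_pmf (\<lambda>\<phi>. ([], \<phi>)) (pol [])"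
| "traj_stopped q pol stop (Suc n) =
     bind_pmf (traj_stopped q pol stop n) (\<lambda>s. if stop s then return_pmf s else step_kernel q pol s)"

definition prob_one :: "'x measure \<Rightarrow> (nat \<Rightarrow> 'x \<Rightarrow> real) \<Rightarrow> nat \<Rightarrow> 'x quant \<Rightarrow> real" where
  "prob_one \<mu> f m = (\<lambda>\<phi>. qpmf \<mu> f m \<phi> True)"

lemma traj_eq_prob_one: "traj \<mu> f pol m n = traj_gen (prob_one \<mu> f m) pol n"
proof (induction n)
  case (Suc n)
  have "(\<lambda>(h, \<phi>). bind_pmf (bernoulli_pmf (qpmf \<mu> f m \<phi> True)) (\<lambda>u.
       map_pmf (\<lambda>\<phi>'. (h @ [(\<phi>, u)], \<phi>')) (pol (h @ [(\<phi>, u)]))))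
      = step_kernel (prob_one \<mu> f m) pol"
    by (auto simp: step_kernel_def prob_one_def fun_eq_iff)
  then show ?case using Suc by simp
qed simp

lemma set_step_kernel:
  "t \<in> set_pmf (step_kernel q pol s) \<Longrightarrow>
     \<exists>u. fst t = fst s @ [(snd s, u)] \<and> snd t \<in> set_pmf (pol (fst t))"
  by (auto simp: step_kernel_def)

lemma traj_gen_length: "s \<in> set_pmf (traj_gen q pol n) \<Longrightarrow> length (fst s) = n"
  by (induction n arbitrary: s) (auto dest!: set_step_kernel)

lemma prefix_state_full: "length (fst s) = n \<Longrightarrow> prefix_state n s = s"
  by (cases s) (simp add: prefix_state_def)

lemma prefix_state_append:
  assumes "length (fst s) = n" "fst t = fst s @ [(snd s, u)]" "k \<le> n"
  shows "prefix_state k t = prefix_state k s"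
  using assms by (cases "k < n") (auto simp: prefix_state_def nth_append)

lemma stops_at_append:
  assumes len: "length (fst s) = n" and t: "fst t = fst s @ [(snd s, u)]"
  shows "stops_at stop (Suc n) t \<longleftrightarrow> \<not> stopped_by stop n s \<and> stop t"
proof -
  have "(\<forall>k<Suc n. \<not> stop (prefix_state k t)) \<longleftrightarrow> \<not> stopped_by stop n s"
    using prefix_state_append[OF len t] by (auto simp: stopped_by_def less_Suc_eq_le)
  then show ?thesis using prefix_state_full[of t "Suc n"] len t by (auto simp: stops_at_def)
qed

text \<open>The map sending a full state at time n to the information at time min N n.\<close>
definition freeze :: "('x state \<Rightarrow> bool) \<Rightarrow> nat \<Rightarrow> 'x state \<Rightarrow> 'x state" where
  "freeze stop n s =
     (if stopped_by stop n s then prefix_state (LEAST k. stop (prefix_state k s)) s else s)"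

lemma stop_freeze:
  assumes "length (fst s) = n" shows "stop (freeze stop n s) \<longleftrightarrow> stopped_by stop n s"
proof (cases "stopped_by stop n s")
  case True
  then obtain k where "stop (prefix_state k s)" by (auto simp: stopped_by_def)
  then have "stop (prefix_state (LEAST k. stop (prefix_state k s)) s)" by (rule LeastI)
  then show ?thesis using True by (simp add: freeze_def)
next
  case False
  then show ?thesis using assms prefix_state_full[OF assms] by (auto simp: freeze_def stopped_by_def)
qed

lemma least_stop_append:
  assumes len: "length (fst s) = n" and t: "fst t = fst s @ [(snd s, u)]"
    and k: "k \<le> n" "stop (prefix_state k s)"
  shows "(LEAST j. stop (prefix_state j t)) = (LEAST j. stop (prefix_state j s))"
    and "(LEAST j. stop (prefix_state j s)) \<le> n"
proof -
  have eq: "j \<le> n \<Longrightarrow> prefix_state j t = prefix_state j s" for j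
    using prefix_state_append[OF len t] by blast
  have least_le: "(LEAST j. stop (prefix_state j s)) \<le> k" using k by (intro Least_le)
  then show "(LEAST j. stop (prefix_state j s)) \<le> n" using k by linarith
  show "(LEAST j. stop (prefix_state j t)) = (LEAST j. stop (prefix_state j s))"
  proof (rule Least_equality)
    show "stop (prefix_state (LEAST j. stop (prefix_state j s)) t)"
      using eq least_le k LeastI[of "\<lambda>j. stop (prefix_state j s)" k] by auto
    fix y assume y: "stop (prefix_state y t)"
    show "(LEAST j. stop (prefix_state j s)) \<le> y"
      using y eq[of y] least_le k by (cases "y \<le> n") (auto intro: Least_le)
  qed
qed

lemma freeze_append:
  assumes len: "length (fst s) = n" and t: "fst t = fst s @ [(snd s, u)]"
  shows "freeze stop (Suc n) t = (if stopped_by stop n s then freeze stop n s else t)"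
proof (cases "stopped_by stop n s")
  case True
  then obtain k where k: "k \<le> n" "stop (prefix_state k s)" by (auto simp: stopped_by_def)
  note least = least_stop_append[where stop=stop, OF len t k]
  have "stopped_by stop (Suc n) t"
    using k prefix_state_append[OF len t] by (auto simp: stopped_by_def intro!: exI[of _ k])
  then show ?thesis
    using True least prefix_state_append[OF len t] by (simp add: freeze_def)
next
  case False
  have "(LEAST j. stop (prefix_state j t)) = Suc n" if "stopped_by stop (Suc n) t"
  proof (rule Least_equality)
    show "stop (prefix_state (Suc n) t)"
      using that False prefix_state_append[OF len t] by (auto simp: stopped_by_def le_Suc_eq)
    show "Suc n \<le> y" if y: "stop (prefix_state y t)" for y
    proof (rule ccontr)
      assume "\<not> Suc n \<le> y"
      then show False using y False prefix_state_append[OF len t, of y] by (auto simp: stopped_by_def)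
    qed
  qed
  then show ?thesis using False prefix_state_full[of t "Suc n"] len t by (auto simp: freeze_def)
qed

lemma traj_stopped_freeze: "traj_stopped q pol stop n = map_pmf (freeze stop n) (traj_gen q pol n)"
proof (induction n)
  case 0
  have "freeze stop 0 s = s" if "s \<in> set_pmf (traj_gen q pol 0)" for s
    using that by (auto simp: freeze_def stopped_by_def prefix_state_def)
  then show ?case by (simp add: map_pmf_comp cong: map_pmf_cong)
next
  case (Suc n)
  have "traj_stopped q pol stop (Suc n) = bind_pmf (traj_gen q pol n)
      (\<lambda>s. if stop (freeze stop n s) then return_pmf (freeze stop n s)
            else step_kernel q pol (freeze stop n s))"
    by (simp add: Suc bind_map_pmf)
  also have "\<dots> = bind_pmf (traj_gen q pol n) (\<lambda>s. map_pmf (freeze stop (Suc n)) (step_kernel q pol s))"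
  proof (rule bind_pmf_cong[OF refl])
    fix s assume s: "s \<in> set_pmf (traj_gen q pol n)"
    note len = traj_gen_length[OF s]
    have step: "map_pmf (freeze stop (Suc n)) (step_kernel q pol s) =
        map_pmf (\<lambda>t. if stopped_by stop n s then freeze stop n s else t) (step_kernel q pol s)"
    proof (intro map_pmf_cong refl)
      fix t assume "t \<in> set_pmf (step_kernel q pol s)"
      then obtain u where "fst t = fst s @ [(snd s, u)]" using set_step_kernel by blast
      then show "freeze stop (Suc n) t = (if stopped_by stop n s then freeze stop n s else t)"
        by (rule freeze_append[OF len])
    qed
    then show "(if stop (freeze stop n s) then return_pmf (freeze stop n s)
                else step_kernel q pol (freeze stop n s)) =
               map_pmf (freeze stop (Suc n)) (step_kernel q pol s)"
    proof (cases "stopped_by stop n s")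
      case True
      then show ?thesis using step stop_freeze[OF len] by simp
    next
      case False
      then have "freeze stop n s = s" by (simp add: freeze_def)
      then show ?thesis using False step stop_freeze[OF len] by simp
    qed
  qed
  also have "\<dots> = map_pmf (freeze stop (Suc n)) (traj_gen q pol (Suc n))"
    by (simp add: map_bind_pmf)
  finally show ?case .
qed

lemma traj_stopped_continuing_integral:
  "(\<integral>\<^sup>+ s. (if stop s then 0 else g s) \<partial>traj_stopped q pol stop n) =
   (\<integral>\<^sup>+ s. (if stopped_by stop n s then 0 else g s) \<partial>traj_gen q pol n)"
  unfolding traj_stopped_freeze nn_integral_map_pmf
proof (intro nn_integral_cong_AE AE_pmfI)
  fix s assume s: "s \<in> set_pmf (traj_gen q pol n)"
  show "(if stop (freeze stop n s) then 0 else g (freeze stop n s)) =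
        (if stopped_by stop n s then 0 else g s)"
  proof -
    have "stop (freeze stop n s) = stopped_by stop n s" by (rule stop_freeze[OF traj_gen_length[OF s]])
    then show ?thesis by (simp add: freeze_def)
  qed
qed

lemma traj_stopped_continuing:
  "emeasure (traj_stopped q pol stop n) {s. \<not> stop s} =
   emeasure (traj_gen q pol n) {s. \<not> stopped_by stop n s}"
proof -
  have ind: "indicator {s. \<not> P s} s = (if P s then 0 else 1 :: ennreal)" for P :: "'x state \<Rightarrow> bool" and s
    by simp
  show ?thesis
    using traj_stopped_continuing_integral[where g="\<lambda>_. 1" and stop=stop and q=q and pol=pol and n=n]
    by (simp flip: nn_integral_indicator add: ind)
qed

lemma step_kernel_stops_at:
  assumes s: "s \<in> set_pmf (traj_gen q pol n)"
  shows "emeasure (step_kernel q pol s) {t. stops_at stop (Suc n) t \<and> B t} =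
         (if stopped_by stop n s then 0 else emeasure (step_kernel q pol s) {t. stop t \<and> B t})"
proof -
  have "emeasure (step_kernel q pol s) {t. stops_at stop (Suc n) t \<and> B t} =
        emeasure (step_kernel q pol s) {t. \<not> stopped_by stop n s \<and> stop t \<and> B t}"
  proof (intro emeasure_eq_AE AE_pmfI)
    fix t assume "t \<in> set_pmf (step_kernel q pol s)"
    then obtain u where "fst t = fst s @ [(snd s, u)]" using set_step_kernel by blast
    then show "t \<in> {t. stops_at stop (Suc n) t \<and> B t} \<longleftrightarrow> t \<in> {t. \<not> stopped_by stop n s \<and> stop t \<and> B t}"
      using stops_at_append[OF traj_gen_length[OF s]] by auto
  qed simp_all
  then show ?thesis by auto
qed

lemma traj_stopped_stopped:
  "emeasure (traj_stopped q pol stop n) {s. stop s \<and> B s} =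
   (\<Sum>k\<le>n. emeasure (traj_gen q pol k) {s. stops_at stop k s \<and> B s})"
proof (induction n)
  case 0
  have "emeasure (traj_stopped q pol stop 0) {s. stop s \<and> B s} =
        emeasure (traj_gen q pol 0) {s. stops_at stop 0 s \<and> B s}"
    by (simp del: emeasure_map_pmf) (intro emeasure_eq_AE AE_pmfI, auto simp: stops_at_def prefix_state_def)
  then show ?case by simp
next
  case (Suc n)
  let ?E = "{s. stop s \<and> B s}"
  let ?g = "\<lambda>s. emeasure (step_kernel q pol s) ?E"
  have "emeasure (traj_stopped q pol stop (Suc n)) ?E =
      (\<integral>\<^sup>+ s. (if stop s then indicator ?E s else ?g s) \<partial>traj_stopped q pol stop n)"
    by (simp, intro nn_integral_cong) simp
  also have "\<dots> = (\<integral>\<^sup>+ s. indicator ?E s + (if stop s then 0 else ?g s) \<partial>traj_stopped q pol stop n)"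
    by (intro nn_integral_cong) (auto simp: indicator_def)
  also have "\<dots> = emeasure (traj_stopped q pol stop n) ?E +
      (\<integral>\<^sup>+ s. (if stop s then 0 else ?g s) \<partial>traj_stopped q pol stop n)"
    by (subst nn_integral_add) auto
  also have "(\<integral>\<^sup>+ s. (if stop s then 0 else ?g s) \<partial>traj_stopped q pol stop n) =
      (\<integral>\<^sup>+ s. (if stopped_by stop n s then 0 else ?g s) \<partial>traj_gen q pol n)"
    by (rule traj_stopped_continuing_integral)
  also have "(\<integral>\<^sup>+ s. (if stopped_by stop n s then 0 else ?g s) \<partial>traj_gen q pol n) =
      (\<integral>\<^sup>+ s. emeasure (step_kernel q pol s) {t. stops_at stop (Suc n) t \<and> B t} \<partial>traj_gen q pol n)"
    by (intro nn_integral_cong_AE AE_pmfI) (simp add: step_kernel_stops_at)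
  also have "\<dots> = emeasure (traj_gen q pol (Suc n)) {s. stops_at stop (Suc n) s \<and> B s}"
    by simp
  finally show ?case using Suc by simp
qed


subsection \<open>Likelihood ratios of the stopped message process\<close>

lemma pmf_bind_density:
  assumes P: "\<And>s. pmf P s = L s * pmf Q s"
    and K: "\<And>s t. s \<in> set_pmf Q \<Longrightarrow> L s * pmf (KP s) t = L' t * pmf (KQ s) t"
    and L: "\<And>s. 0 \<le> L s" and L': "0 \<le> L' t"
  shows "pmf (bind_pmf P KP) t = L' t * pmf (bind_pmf Q KQ) t"
proof -
  have "ennreal (pmf (bind_pmf P KP) t)
      = (\<integral>\<^sup>+ s. ennreal (pmf P s) * ennreal (pmf (KP s) t) \<partial>count_space UNIV)"
    by (simp add: ennreal_pmf_bind nn_integral_measure_pmf)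
  also have "\<dots> = (\<integral>\<^sup>+ s. ennreal (L s * pmf (KP s) t) \<partial>Q)"
    by (simp add: nn_integral_measure_pmf P L ennreal_mult[symmetric] mult_ac)
  also have "\<dots> = (\<integral>\<^sup>+ s. ennreal (L' t) * ennreal (pmf (KQ s) t) \<partial>Q)"
    by (intro nn_integral_cong_AE AE_pmfI) (simp add: K L' ennreal_mult)
  also have "\<dots> = ennreal (L' t * pmf (bind_pmf Q KQ) t)"
    by (simp add: nn_integral_cmult ennreal_pmf_bind ennreal_mult L')
  finally show ?thesis using L' by simp
qed

definition msg_prob :: "('x quant \<Rightarrow> real) \<Rightarrow> 'x quant \<Rightarrow> bool \<Rightarrow> real" where
  "msg_prob q \<phi> u = (if u then q \<phi> else 1 - q \<phi>)"

text \<open>Likelihood ratio of a single message (the absolute value makes nonnegativity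
  hold without side conditions).\<close>
definition msg_lr :: "('x quant \<Rightarrow> real) \<Rightarrow> ('x quant \<Rightarrow> real) \<Rightarrow> 'x quant \<Rightarrow> bool \<Rightarrow> real" where
  "msg_lr q q' \<phi> u = \<bar>msg_prob q \<phi> u / msg_prob q' \<phi> u\<bar>"

definition hist_lr :: "('x quant \<Rightarrow> real) \<Rightarrow> ('x quant \<Rightarrow> real) \<Rightarrow> 'x state \<Rightarrow> real" where
  "hist_lr q q' s = prod_list (map (\<lambda>(\<phi>, u). msg_lr q q' \<phi> u) (fst s))"

definition msg_kl :: "('x quant \<Rightarrow> real) \<Rightarrow> ('x quant \<Rightarrow> real) \<Rightarrow> 'x quant \<Rightarrow> real" where
  "msg_kl q q' \<phi> = (\<Sum>u\<in>(UNIV::bool set). msg_prob q \<phi> u * ln (msg_prob q \<phi> u / msg_prob q' \<phi> u))"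

lemma msg_lr_nonneg [simp]: "0 \<le> msg_lr q q' \<phi> u"
  by (simp add: msg_lr_def)

lemma hist_lr_nonneg [simp]: "0 \<le> hist_lr q q' s"
  unfolding hist_lr_def by (intro prod_list_nonneg) (auto simp: msg_lr_def)

lemma hist_lr_append:
  "fst t = fst s @ [(snd s, u)] \<Longrightarrow> hist_lr q q' t = hist_lr q q' s * msg_lr q q' (snd s) u"
  by (simp add: hist_lr_def)

locale msg_laws =
  fixes q q' :: "'x quant \<Rightarrow> real" and Phi0 :: "'x quant set"
  assumes q_range: "\<phi> \<in> Phi0 \<Longrightarrow> 0 \<le> q \<phi> \<and> q \<phi> \<le> 1"
    and q'_range: "\<phi> \<in> Phi0 \<Longrightarrow> 0 \<le> q' \<phi> \<and> q' \<phi> \<le> 1"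
    and abscont: "\<phi> \<in> Phi0 \<Longrightarrow> msg_prob q' \<phi> u = 0 \<Longrightarrow> msg_prob q \<phi> u = 0"
begin

lemma msg_prob_nonneg: "\<phi> \<in> Phi0 \<Longrightarrow> 0 \<le> msg_prob q \<phi> u" "\<phi> \<in> Phi0 \<Longrightarrow> 0 \<le> msg_prob q' \<phi> u"
  using q_range q'_range by (auto simp: msg_prob_def)

lemma msg_prob_sum:
  "msg_prob q \<phi> True + msg_prob q \<phi> False = 1" "msg_prob q' \<phi> True + msg_prob q' \<phi> False = 1"
  by (auto simp: msg_prob_def)

lemma pmf_bernoulli_msg_prob:
  "\<phi> \<in> Phi0 \<Longrightarrow> pmf (bernoulli_pmf (q \<phi>)) u = msg_prob q \<phi> u"
  "\<phi> \<in> Phi0 \<Longrightarrow> pmf (bernoulli_pmf (q' \<phi>)) u = msg_prob q' \<phi> u"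
  using q_range q'_range by (cases u; simp add: msg_prob_def)+

lemma msg_kl_nonneg: assumes "\<phi> \<in> Phi0" shows "0 \<le> msg_kl q q' \<phi>"
proof -
  have term_ge: "msg_prob q \<phi> u - msg_prob q' \<phi> u
      \<le> msg_prob q \<phi> u * ln (msg_prob q \<phi> u / msg_prob q' \<phi> u)" for u
  proof (cases "msg_prob q \<phi> u = 0")
    case False
    define a b where "a = msg_prob q \<phi> u" and "b = msg_prob q' \<phi> u"
    have ap: "0 < a" using False msg_prob_nonneg[OF assms] by (simp add: a_def order_less_le)
    have "b \<noteq> 0" using abscont[OF assms, of u] False by (auto simp: b_def)
    then have bp: "0 < b" using msg_prob_nonneg(2)[OF assms, of u] by (simp add: b_def order_less_le)
    have "a * (1 - 1 / (a / b)) \<le> a * ln (a / b)"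
      using ap bp by (intro mult_left_mono ln_ge_one_minus_inverse) auto
    moreover have "a * (1 - 1 / (a / b)) = a - b" using ap bp by (simp add: field_simps)
    ultimately show ?thesis by (simp add: a_def b_def)
  qed (use msg_prob_nonneg[OF assms] in simp)
  have "0 = (msg_prob q \<phi> True - msg_prob q' \<phi> True) + (msg_prob q \<phi> False - msg_prob q' \<phi> False)"
    using msg_prob_sum[of \<phi>] by linarith
  also have "\<dots> \<le> msg_kl q q' \<phi>"
    unfolding msg_kl_def using term_ge[of True] term_ge[of False] by (simp add: UNIV_bool)
  finally show ?thesis .
qed

lemma kl_fun_msg_step:
  assumes "\<phi> \<in> Phi0" and L: "0 \<le> L"
  shows "msg_prob q' \<phi> True * kl_fun (L * msg_lr q q' \<phi> True) +
         msg_prob q' \<phi> False * kl_fun (L * msg_lr q q' \<phi> False) = kl_fun L + L * msg_kl q q' \<phi>"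
proof -
  have term_eq: "msg_prob q' \<phi> u * kl_fun (L * msg_lr q q' \<phi> u) =
      L * msg_prob q \<phi> u * ln L + L * msg_prob q \<phi> u * ln (msg_prob q \<phi> u / msg_prob q' \<phi> u)
      - L * msg_prob q \<phi> u + msg_prob q' \<phi> u" for u
    unfolding msg_lr_def using msg_prob_nonneg[OF assms(1)] abscont[OF assms(1)] L
    by (intro kl_fun_scaled_ratio) auto
  have "L * msg_prob q \<phi> True * ln L + L * msg_prob q \<phi> False * ln L = L * ln L"
    "L * msg_prob q \<phi> True + L * msg_prob q \<phi> False = L"
    using msg_prob_sum(1)[of \<phi>] by (simp_all add: algebra_simps flip: distrib_left)
  then show ?thesis unfolding term_eq msg_kl_def using msg_prob_sum(2)[of \<phi>]
    by (simp add: UNIV_bool kl_fun_def algebra_simps)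
qed

end

locale msg_test = msg_laws +
  fixes pol :: "'x hist \<Rightarrow> 'x quant pmf"
  assumes pol_quantizers: "set_pmf (pol h) \<subseteq> Phi0"
begin

lemma traj_stopped_quantizer: "s \<in> set_pmf (traj_stopped q0 pol stop n) \<Longrightarrow> snd s \<in> Phi0"
proof (induction n arbitrary: s)
  case 0 then show ?case using pol_quantizers[of "[]"] by auto
next
  case (Suc n)
  then obtain s0 where s0: "s0 \<in> set_pmf (traj_stopped q0 pol stop n)"
    and s: "s \<in> set_pmf (if stop s0 then return_pmf s0 else step_kernel q0 pol s0)" by auto
  then show ?case using Suc.IH[OF s0] pol_quantizers
    by (cases "stop s0") (auto dest!: set_step_kernel)
qed

lemma step_kernel_density:
  assumes s: "snd s \<in> Phi0"
  shows "pmf (step_kernel q pol s) t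
           = msg_lr q q' (snd s) (snd (last (fst t))) * pmf (step_kernel q' pol s) t"
  unfolding step_kernel_def
proof (rule pmf_bind_density[where L="msg_lr q q' (snd s)"])
  fix u
  show "pmf (bernoulli_pmf (q (snd s))) u = msg_lr q q' (snd s) u * pmf (bernoulli_pmf (q' (snd s))) u"
    using abscont[OF s, of u] msg_prob_nonneg[OF s, of u]
      by (simp add: pmf_bernoulli_msg_prob[OF s] msg_lr_def)
next
  fix u t
  let ?K = "map_pmf (\<lambda>\<phi>'. (fst s @ [(snd s, u)], \<phi>')) (pol (fst s @ [(snd s, u)]))"
  show "msg_lr q q' (snd s) u * pmf ?K t = msg_lr q q' (snd s) (snd (last (fst t))) * pmf ?K t"
    by (cases "t \<in> set_pmf ?K") (auto simp: pmf_eq_0_set_pmf)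
qed (use msg_lr_nonneg in auto)

lemma traj_stopped_density:
  "pmf (traj_stopped q pol stop n) s = hist_lr q q' s * pmf (traj_stopped q' pol stop n) s"
proof (induction n arbitrary: s)
  case 0
  then show ?case
    by (cases "pmf (traj_stopped q' pol stop 0) s = 0") (auto simp: hist_lr_def simp flip: set_pmf_iff)
next
  case (Suc n)
  show ?case unfolding traj_stopped.simps
  proof (rule pmf_bind_density[where L="hist_lr q q'"])
    fix s0 t assume s0: "s0 \<in> set_pmf (traj_stopped q' pol stop n)"
    note quant = traj_stopped_quantizer[OF s0]
    show "hist_lr q q' s0 * pmf (if stop s0 then return_pmf s0 else step_kernel q pol s0) t =
          hist_lr q q' t * pmf (if stop s0 then return_pmf s0 else step_kernel q' pol s0) t"
    proof (cases "stop s0 \<or> t \<notin> set_pmf (step_kernel q' pol s0)")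
      case True
      then show ?thesis using step_kernel_density[OF quant, of t]
        by (auto simp: indicator_def set_pmf_iff)
    next
      case False
      then obtain u where "fst t = fst s0 @ [(snd s0, u)]" using set_step_kernel by blast
      then show ?thesis using False step_kernel_density[OF quant, of t] by (simp add: hist_lr_def)
    qed
  qed (simp_all add: Suc.IH)
qed

lemma traj_stopped_integral:
  "(\<integral>\<^sup>+ s. g s \<partial>traj_stopped q pol stop n) =
   (\<integral>\<^sup>+ s. ennreal (hist_lr q q' s) * g s \<partial>traj_stopped q' pol stop n)"
proof -
  have "ennreal (pmf (traj_stopped q pol stop n) s) =
        ennreal (hist_lr q q' s) * ennreal (pmf (traj_stopped q' pol stop n) s)" for s
    using traj_stopped_density[of stop n s] hist_lr_nonneg by (simp add: ennreal_mult)
  then show ?thesis by (simp add: nn_integral_measure_pmf mult_ac)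
qed

lemma traj_stopped_null:
  assumes "measure (traj_stopped q' pol stop n) S = 0"
  shows "measure (traj_stopped q pol stop n) S = 0"
proof -
  have "emeasure (traj_stopped q' pol stop n) S = 0"
    using assms by (simp add: measure_pmf.emeasure_eq_measure)
  then have "AE s in traj_stopped q' pol stop n. s \<notin> S" by (intro AE_not_in) auto
  then have "(\<integral>\<^sup>+ s. ennreal (hist_lr q q' s) * indicator S s \<partial>traj_stopped q' pol stop n) = 0"
    by (subst nn_integral_0_iff_AE) auto
  then have "emeasure (traj_stopped q pol stop n) S = 0"
    using traj_stopped_integral[where g="indicator S" and stop=stop and n=n] by simp
  then show ?thesis by (simp add: measure_pmf.emeasure_eq_measure)
qed

definition stopped_div :: "('x state \<Rightarrow> bool) \<Rightarrow> nat \<Rightarrow> ennreal" where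
  "stopped_div stop n = (\<integral>\<^sup>+ s. ennreal (kl_fun (hist_lr q q' s)) \<partial>traj_stopped q' pol stop n)"

lemma stopped_div_step:
  assumes "snd s \<in> Phi0"
  shows "(\<integral>\<^sup>+ t. ennreal (kl_fun (hist_lr q q' t)) \<partial>step_kernel q' pol s) =
         ennreal (kl_fun (hist_lr q q' s) + hist_lr q q' s * msg_kl q q' (snd s))"
proof -
  let ?k = "\<lambda>u. kl_fun (hist_lr q q' s * msg_lr q q' (snd s) u)"
  have "(\<integral>\<^sup>+ t. ennreal (kl_fun (hist_lr q q' t)) \<partial>step_kernel q' pol s) =
        (\<integral>\<^sup>+ u. ennreal (?k u) \<partial>bernoulli_pmf (q' (snd s)))"
    unfolding step_kernel_def by (simp add: hist_lr_append measure_pmf.emeasure_space_1)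
  also have "\<dots> = ennreal (msg_prob q' (snd s) True * ?k True + msg_prob q' (snd s) False * ?k False)"
    using q'_range[OF assms] kl_fun_nonneg hist_lr_nonneg msg_lr_nonneg
    by (simp add: msg_prob_def ennreal_mult[symmetric] mult_ac ennreal_plus[symmetric] del: ennreal_plus)
  also have "\<dots> = ennreal (kl_fun (hist_lr q q' s) + hist_lr q q' s * msg_kl q q' (snd s))"
    using kl_fun_msg_step[OF assms hist_lr_nonneg[of q q' s]] by simp
  finally show ?thesis .
qed

lemma stopped_div_Suc:
  "stopped_div stop (Suc n) = stopped_div stop n +
     (\<integral>\<^sup>+ s. (if stop s then 0 else ennreal (msg_kl q q' (snd s))) \<partial>traj_stopped q pol stop n)"
proof -
  let ?Q = "traj_stopped q' pol stop n"
  have "stopped_div stop (Suc n) = (\<integral>\<^sup>+ s. ennreal (kl_fun (hist_lr q q' s)) +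
      (if stop s then 0 else ennreal (hist_lr q q' s) * ennreal (msg_kl q q' (snd s))) \<partial>?Q)"
    unfolding stopped_div_def traj_stopped.simps nn_integral_bind_pmf
  proof (intro nn_integral_cong_AE AE_pmfI)
    fix s assume "s \<in> set_pmf ?Q"
    note quant = traj_stopped_quantizer[OF this]
    show "(\<integral>\<^sup>+ t. ennreal (kl_fun (hist_lr q q' t))
             \<partial>(if stop s then return_pmf s else step_kernel q' pol s)) =
      ennreal (kl_fun (hist_lr q q' s)) +
      (if stop s then 0 else ennreal (hist_lr q q' s) * ennreal (msg_kl q q' (snd s)))"
    proof (cases "stop s")
      case False
      have "0 \<le> kl_fun (hist_lr q q' s)" "0 \<le> hist_lr q q' s * msg_kl q q' (snd s)"
        using msg_kl_nonneg[OF quant] by (simp_all add: kl_fun_nonneg)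
      then show ?thesis
        using False stopped_div_step[OF quant] msg_kl_nonneg[OF quant] by (simp add: ennreal_mult)
    qed (simp add: nn_integral_return)
  qed
  also have "\<dots> = stopped_div stop n +
      (\<integral>\<^sup>+ s. (if stop s then 0 else ennreal (hist_lr q q' s) * ennreal (msg_kl q q' (snd s))) \<partial>?Q)"
    unfolding stopped_div_def by (rule nn_integral_add) auto
  also have "(\<integral>\<^sup>+ s. (if stop s then 0 else ennreal (hist_lr q q' s) * ennreal (msg_kl q q' (snd s))) \<partial>?Q)
     = (\<integral>\<^sup>+ s. (if stop s then 0 else ennreal (msg_kl q q' (snd s))) \<partial>traj_stopped q pol stop n)"
    by (subst traj_stopped_integral[where stop=stop and n=n]) (auto intro!: nn_integral_cong)
  finally show ?thesis .
qed

lemma stopped_div_sum: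
  "stopped_div stop n =
     (\<Sum>k<n. \<integral>\<^sup>+ s. (if stop s then 0 else ennreal (msg_kl q q' (snd s))) \<partial>traj_stopped q pol stop k)"
proof (induction n)
  case 0 show ?case by (simp add: stopped_div_def hist_lr_def kl_fun_def)
next
  case (Suc n) then show ?case by (simp add: stopped_div_Suc add.commute)
qed

lemma stopped_div_ge:
  fixes stop :: "'x state \<Rightarrow> bool" and n :: nat and S :: "'x state set"
  defines "p \<equiv> measure (traj_stopped q pol stop n) S" and "p' \<equiv> measure (traj_stopped q' pol stop n) S"
  assumes "0 < p" and "0 < p'"
  shows "ennreal (p * ln (p / p') - p + p') \<le> stopped_div stop n"
proof -
  let ?Q = "traj_stopped q' pol stop n"
  have mass: "(\<integral>\<^sup>+ s. ennreal (indicator S s * hist_lr q q' s) \<partial>?Q) = ennreal p"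
    using traj_stopped_integral[where g="indicator S" and stop=stop and n=n]
    by (simp add: p_def measure_pmf.emeasure_eq_measure indicator_mult_ennreal mult.commute)
  have "ennreal (p * ln (p / p') - p + p') \<le> (\<integral>\<^sup>+ s. ennreal (indicator S s * kl_fun (hist_lr q q' s)) \<partial>?Q)"
    using kl_fun_jensen_on_set[OF _ _ _ hist_lr_nonneg mass] assms
    by (simp add: p'_def measure_pmf.finite_measure)
  also have "\<dots> \<le> stopped_div stop n"
    unfolding stopped_div_def
    by (intro nn_integral_mono) (auto simp: indicator_def intro!: kl_fun_nonneg hist_lr_nonneg)
  finally show ?thesis .
qed

end


subsection \<open>Densities and quantized information numbers\<close>

lemma sets_Qm [simp]: "space (Qm \<mu> f k) = space \<mu>" "sets (Qm \<mu> f k) = sets \<mu>"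
  by (simp_all add: Qm_def)

lemma emeasure_Qm:
  "f k \<in> borel_measurable \<mu> \<Longrightarrow> A \<in> sets \<mu> \<Longrightarrow>
     emeasure (Qm \<mu> f k) A = (\<integral>\<^sup>+ x. ennreal (f k x) * indicator A x \<partial>\<mu>)"
  unfolding Qm_def by (intro emeasure_density) auto

lemma Phi_sets: "\<phi> \<in> Phi \<mu> \<Longrightarrow> {x \<in> space \<mu>. \<phi> x = u} \<in> sets \<mu>"
  unfolding Phi_def by measurable

lemma qpmf_sum:
  assumes "prob_space (Qm \<mu> f m)" and "\<phi> \<in> Phi \<mu>"
  shows "qpmf \<mu> f m \<phi> True + qpmf \<mu> f m \<phi> False = 1"
proof -
  interpret prob_space "Qm \<mu> f m" by fact
  have "space \<mu> - {x \<in> space \<mu>. \<phi> x = True} = {x \<in> space \<mu>. \<phi> x = False}" by auto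
  then have "prob {x \<in> space \<mu>. \<phi> x = False} = 1 - prob {x \<in> space \<mu>. \<phi> x = True}"
    using prob_compl[of "{x \<in> space \<mu>. \<phi> x = True}"] Phi_sets[OF assms(2), of True] by simp
  then show ?thesis unfolding qpmf_def by simp
qed

locale kl_pair =
  fixes \<mu> :: "'x measure" and f :: "nat \<Rightarrow> 'x \<Rightarrow> real" and m m' :: nat
  assumes fm: "f m \<in> borel_measurable \<mu>" "\<forall>x\<in>space \<mu>. 0 \<le> f m x" "prob_space (Qm \<mu> f m)"
    and fm': "f m' \<in> borel_measurable \<mu>" "\<forall>x\<in>space \<mu>. 0 \<le> f m' x" "prob_space (Qm \<mu> f m')"
    and abscont_ae: "AE x in Qm \<mu> f m. 0 < f m' x"
    and llr_integrable: "integrable (Qm \<mu> f m) (\<lambda>x. ln (f m x / f m' x))"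
begin

abbreviation "P \<equiv> Qm \<mu> f m"
abbreviation "Q \<equiv> Qm \<mu> f m'"

sublocale P: prob_space P by (rule fm(3))
sublocale Q: prob_space Q by (rule fm'(3))

lemma abscont_set:
  assumes A: "A \<in> sets \<mu>" and null: "measure Q A = 0"
  shows "measure P A = 0"
proof -
  have "(\<integral>\<^sup>+ x. ennreal (f m' x) * indicator A x \<partial>\<mu>) = 0"
    using null emeasure_Qm[where f=f and k=m', OF fm'(1) A] Q.emeasure_eq_measure by simp
  then have "AE x in \<mu>. ennreal (f m' x) * indicator A x = 0"
    using fm' A by (subst (asm) nn_integral_0_iff_AE) auto
  moreover have "AE x in \<mu>. 0 < f m x \<longrightarrow> 0 < f m' x"
    using abscont_ae fm unfolding Qm_def by (subst (asm) AE_density) auto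
  ultimately have "AE x in \<mu>. ennreal (f m x) * indicator A x = 0"
    by eventually_elim (auto simp: indicator_def ennreal_eq_0_iff)
  then have "emeasure P A = 0"
    using emeasure_Qm[where f=f and k=m, OF fm(1) A] fm A
      by (subst (asm) nn_integral_0_iff_AE[symmetric]) auto
  then show ?thesis using P.emeasure_eq_measure by simp
qed

lemma inverse_lr_integral:
  assumes A: "A \<in> sets \<mu>"
  defines "h \<equiv> \<lambda>x. indicator A x * (f m' x / f m x)"
  shows "integrable P h" and "(\<integral>x. h x \<partial>P) \<le> measure Q A"
proof -
  have h_nonneg: "x \<in> space \<mu> \<Longrightarrow> 0 \<le> h x" for x
    using fm(2) fm'(2) by (auto simp: h_def)
  have h_meas: "h \<in> borel_measurable \<mu>"
    unfolding h_def using fm(1) fm'(1) A by measurable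
  then have h_meas_P: "h \<in> borel_measurable P" by (simp add: Qm_def)
  have "(\<integral>\<^sup>+ x. ennreal (h x) \<partial>P) = (\<integral>\<^sup>+ x. ennreal (f m x) * ennreal (h x) \<partial>\<mu>)"
    unfolding Qm_def using fm h_meas by (subst nn_integral_density) auto
  also have "\<dots> \<le> (\<integral>\<^sup>+ x. ennreal (f m' x) * indicator A x \<partial>\<mu>)"
  proof (intro nn_integral_mono)
    fix x assume x: "x \<in> space \<mu>"
    show "ennreal (f m x) * ennreal (h x) \<le> ennreal (f m' x) * indicator A x"
    proof (cases "f m x = 0")
      case False
      have "ennreal (f m x) * ennreal (h x) = ennreal (f m x * h x)"
        using fm(2) h_nonneg x by (simp add: ennreal_mult)
      also have "f m x * h x = f m' x * indicator A x" using False by (simp add: h_def)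
      finally show ?thesis by (cases "x \<in> A") auto
    qed simp
  qed
  also have "\<dots> = ennreal (measure Q A)"
    using emeasure_Qm[where f=f and k=m', OF fm'(1) A] Q.emeasure_eq_measure by simp
  finally have bound: "(\<integral>\<^sup>+ x. ennreal (h x) \<partial>P) \<le> ennreal (measure Q A)" .
  show int: "integrable P h"
    using h_meas_P h_nonneg bound by (intro integrableI_nonneg AE_I2) (auto simp: le_less_trans)
  have "ennreal (\<integral>x. h x \<partial>P) = (\<integral>\<^sup>+ x. ennreal (h x) \<partial>P)"
    using int h_nonneg by (intro nn_integral_eq_integral[symmetric] AE_I2) auto
  then show "(\<integral>x. h x \<partial>P) \<le> measure Q A" using bound by (metis ennreal_le_iff measure_nonneg)
qed

lemma llr_part_integrable:
  "A \<in> sets \<mu> \<Longrightarrow> integrable P (\<lambda>x. indicator A x * ln (f m x / f m' x))"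
  using integrable_real_mult_indicator[OF _ llr_integrable, of A] by (simp add: mult.commute)

lemma log_sum_on_set:
  assumes A: "A \<in> sets \<mu>"
  defines "a \<equiv> measure P A" and "b \<equiv> measure Q A"
  shows "a * ln (a / b) \<le> (\<integral>x. indicator A x * ln (f m x / f m' x) \<partial>P)"
proof (cases "a = 0")
  case True
  then have "AE x in P. x \<notin> A"
    using A P.emeasure_eq_measure by (intro AE_not_in) (auto simp: a_def)
  then have "(\<integral>x. indicator A x * ln (f m x / f m' x) \<partial>P) = (\<integral>x. 0 \<partial>P)"
    using borel_measurable_integrable[OF llr_part_integrable[OF A]] by (intro integral_cong_AE) auto
  then show ?thesis using True by simp
next
  case False
  then have ap: "0 < a" using measure_nonneg[of P A] unfolding a_def by linarith
  have "b \<noteq> 0" using abscont_set[OF A] False unfolding a_def b_def by blast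
  then have bp: "0 < b" using measure_nonneg[of Q A] unfolding b_def by linarith
  define c where "c = ln (a / b)"
  define h where "h = (\<lambda>x. indicator A x * (f m' x / f m x))"
  have tangent: "AE x in P. indicator A x * (c + 1) - (a / b) * h x \<le> indicator A x * ln (f m x / f m' x)"
  proof -
    have "AE x in P. 0 < f m x \<and> 0 < f m' x"
      using abscont_ae fm unfolding Qm_def by (subst AE_density) (auto simp: AE_density)
    then show ?thesis
    proof eventually_elim
      case (elim x)
      have "ln (a / b) + 1 - (a / b) / (f m x / f m' x) \<le> ln (f m x / f m' x)"
        using elim ap bp by (intro ln_tangent_lower) auto
      moreover have "(a / b) / (f m x / f m' x) = (a / b) * (f m' x / f m x)" by simp
      ultimately show ?case by (simp add: h_def c_def indicator_def)
    qed
  qed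
  have A_int: "integrable P (\<lambda>x. indicator A x * (c + 1))"
    using A P.emeasure_finite[of A]
    by (intro integrable_mult_left) (simp add: integrable_indicator_iff less_top[symmetric])
  note h_int = inverse_lr_integral[OF A, folded h_def]
  have "a * (c + 1) - (a / b) * (\<integral>x. h x \<partial>P) = (\<integral>x. indicator A x * (c + 1) - (a / b) * h x \<partial>P)"
    using h_int A_int A by (subst Bochner_Integration.integral_diff) (auto simp: a_def)
  also have "\<dots> \<le> (\<integral>x. indicator A x * ln (f m x / f m' x) \<partial>P)"
  proof (rule integral_mono_AE[OF _ _ tangent])
    show "integrable P (\<lambda>x. indicator A x * (c + 1) - (a / b) * h x)"
      using h_int A_int by (intro Bochner_Integration.integrable_diff integrable_mult_right) auto
  qed (rule llr_part_integrable[OF A])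
  finally have "a * (c + 1) - (a / b) * (\<integral>x. h x \<partial>P) \<le> (\<integral>x. indicator A x * ln (f m x / f m' x) \<partial>P)" .
  moreover have "(a / b) * (\<integral>x. h x \<partial>P) \<le> (a / b) * b"
    using h_int(2) ap bp by (intro mult_left_mono) (auto simp: b_def)
  ultimately show ?thesis using bp by (simp add: c_def algebra_simps)
qed

lemma Idet_le_kl:
  assumes \<phi>: "\<phi> \<in> Phi \<mu>"
  shows "Idet \<mu> f m m' \<phi> \<le> (\<integral>x. ln (f m x / f m' x) \<partial>P)"
proof -
  let ?g = "\<lambda>x. ln (f m x / f m' x)"
  let ?A = "\<lambda>u. {x \<in> space \<mu>. \<phi> x = u}"
  note int = llr_part_integrable[OF Phi_sets[OF \<phi>]]
  have "Idet \<mu> f m m' \<phi> = (\<Sum>u\<in>UNIV. measure P (?A u) * ln (measure P (?A u) / measure Q (?A u)))"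
    by (simp add: Idet_def qpmf_def)
  also have "\<dots> \<le> (\<integral>x. indicator (?A True) x * ?g x \<partial>P) + (\<integral>x. indicator (?A False) x * ?g x \<partial>P)"
    using log_sum_on_set[OF Phi_sets[OF \<phi>], of True] log_sum_on_set[OF Phi_sets[OF \<phi>], of False]
    by (simp add: UNIV_bool)
  also have "\<dots> = (\<integral>x. indicator (?A True) x * ?g x + indicator (?A False) x * ?g x \<partial>P)"
    by (intro Bochner_Integration.integral_add[symmetric] int)
  also have "\<dots> = (\<integral>x. ?g x \<partial>P)"
    by (intro Bochner_Integration.integral_cong) (auto simp: indicator_def)
  finally show ?thesis .
qed

end


subsection \<open>The decentralized test as a message process\<close>

lemma msg_prob_prob_one:
  assumes "prob_space (Qm \<mu> f m)" "\<phi> \<in> Phi \<mu>"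
  shows "msg_prob (prob_one \<mu> f m) \<phi> u = qpmf \<mu> f m \<phi> u"
  using qpmf_sum[OF assms] by (cases u) (auto simp: msg_prob_def prob_one_def)

context kl_pair
begin

lemma msg_laws: "msg_laws (prob_one \<mu> f m) (prob_one \<mu> f m') (Phi \<mu>)"
proof
  fix \<phi> assume \<phi>: "\<phi> \<in> Phi \<mu>"
  have nonneg: "0 \<le> qpmf \<mu> f k \<phi> u" for k u by (simp add: qpmf_def)
  show "0 \<le> prob_one \<mu> f m \<phi> \<and> prob_one \<mu> f m \<phi> \<le> 1"
    using qpmf_sum[OF fm(3) \<phi>] nonneg[of m True] nonneg[of m False] unfolding prob_one_def by linarith
  show "0 \<le> prob_one \<mu> f m' \<phi> \<and> prob_one \<mu> f m' \<phi> \<le> 1"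
    using qpmf_sum[OF fm'(3) \<phi>] nonneg[of m' True] nonneg[of m' False] unfolding prob_one_def
      by linarith
  fix u assume "msg_prob (prob_one \<mu> f m') \<phi> u = 0"
  then have "measure Q {x \<in> space \<mu>. \<phi> x = u} = 0"
    using msg_prob_prob_one[OF fm'(3) \<phi>] by (simp add: qpmf_def)
  then have "measure P {x \<in> space \<mu>. \<phi> x = u} = 0" using abscont_set Phi_sets[OF \<phi>] by blast
  then show "msg_prob (prob_one \<mu> f m) \<phi> u = 0"
    using msg_prob_prob_one[OF fm(3) \<phi>] by (simp add: qpmf_def)
qed

lemma msg_test:
  assumes "\<And>h. set_pmf (pol h) \<subseteq> Phi \<mu>"
  shows "msg_test (prob_one \<mu> f m) (prob_one \<mu> f m') (Phi \<mu>) pol"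
  using msg_laws assms by (simp add: msg_test_def msg_test_axioms_def)

lemma msg_kl_eq_Idet:
  "\<phi> \<in> Phi \<mu> \<Longrightarrow> msg_kl (prob_one \<mu> f m) (prob_one \<mu> f m') \<phi> = Idet \<mu> f m m' \<phi>"
  unfolding msg_kl_def Idet_def using msg_prob_prob_one[OF fm(3)] msg_prob_prob_one[OF fm'(3)] by simp

lemma Idet_bounds:
  assumes "\<phi> \<in> Phi \<mu>"
  shows "0 \<le> Idet \<mu> f m m' \<phi>" and "Idet \<mu> f m m' \<phi> \<le> (\<integral>x. ln (f m x / f m' x) \<partial>P)"
  using msg_laws.msg_kl_nonneg[OF msg_laws assms] msg_kl_eq_Idet[OF assms] Idet_le_kl[OF assms]
  by simp_all

lemma Irand_nn_integral:
  assumes "set_pmf p \<subseteq> Phi \<mu>"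
  shows "(\<integral>\<^sup>+ \<phi>. ennreal (Idet \<mu> f m m' \<phi>) \<partial>p) = ennreal (Irand \<mu> f m m' p)"
proof -
  have bounds: "AE \<phi> in p. 0 \<le> Idet \<mu> f m m' \<phi> \<and> Idet \<mu> f m m' \<phi> \<le> (\<integral>x. ln (f m x / f m' x) \<partial>P)"
    using Idet_bounds assms by (auto intro!: AE_pmfI)
  then have "integrable p (Idet \<mu> f m m')"
    by (intro measure_pmf.integrable_const_bound[where B="\<integral>x. ln (f m x / f m' x) \<partial>P"]) auto
  then show ?thesis
    unfolding Irand_def using bounds by (intro nn_integral_eq_integral) auto
qed

text \<open>Randomized quantizers do not exceed the full information either (the constant
  quantizer shows that the full information is nonnegative).\<close>
lemma Irand_le_kl:
  assumes "set_pmf p \<subseteq> Phi \<mu>"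
  shows "Irand \<mu> f m m' p \<le> (\<integral>x. ln (f m x / f m' x) \<partial>P)"
proof -
  have "ennreal (Irand \<mu> f m m' p) \<le> (\<integral>\<^sup>+ \<phi>. ennreal (\<integral>x. ln (f m x / f m' x) \<partial>P) \<partial>p)"
    unfolding Irand_nn_integral[OF assms, symmetric]
    using Idet_bounds(2) assms by (intro nn_integral_mono_AE AE_pmfI ennreal_leI) auto
  moreover have "0 \<le> (\<integral>x. ln (f m x / f m' x) \<partial>P)"
    using Idet_bounds[of "\<lambda>_. True"] by (simp add: Phi_def)
  ultimately show ?thesis by (simp add: measure_pmf.emeasure_space_1)
qed

lemma stopped_div_eq:
  assumes quant: "\<And>h. set_pmf (pol h) \<subseteq> Phi \<mu>"
  shows "msg_test.stopped_div (prob_one \<mu> f m) (prob_one \<mu> f m') pol stop n =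
    (\<Sum>k<n. \<integral>\<^sup>+ s. (if stop s then 0 else ennreal (Idet \<mu> f m m' (snd s)))
                 \<partial>traj_stopped (prob_one \<mu> f m) pol stop k)"
proof -
  interpret T: msg_test "prob_one \<mu> f m" "prob_one \<mu> f m'" "Phi \<mu>" pol by (rule msg_test[OF quant])
  show ?thesis unfolding T.stopped_div_sum
    using T.traj_stopped_quantizer msg_kl_eq_Idet
    by (intro sum.cong refl nn_integral_cong_AE AE_pmfI) auto
qed

end

lemma expected_N_eq:
  "expected_N \<mu> f pol stop m =
     (\<Sum>k. ennreal (measure (traj_stopped (prob_one \<mu> f m) pol stop k) {s. \<not> stop s}))"
proof -
  have "measure (traj_stopped q pol stop k) {s. \<not> stop s}
      = measure (traj_gen q pol k) {s. \<not> stopped_by stop k s}"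
    for q and k
    using traj_stopped_continuing[of q pol stop k] by (simp add: measure_pmf.emeasure_eq_measure)
  then show ?thesis unfolding expected_N_def traj_eq_prob_one by simp
qed

lemma stopped_error_le:
  "measure (traj_stopped (prob_one \<mu> f m) pol stop n) {s. stop s \<and> dec s \<noteq> m}
     \<le> error_prob \<mu> f pol stop dec m"
proof -
  let ?a = "\<lambda>k. measure (traj \<mu> f pol m k) {s. stops_at stop k s \<and> dec s \<noteq> m}"
  have partial: "measure (traj_stopped (prob_one \<mu> f m) pol stop n) {s. stop s \<and> dec s \<noteq> m} = (\<Sum>k\<le>n. ?a k)"
    for n
    using traj_stopped_stopped[of "prob_one \<mu> f m" pol stop n "\<lambda>s. dec s \<noteq> m"]
    by (simp add: traj_eq_prob_one measure_pmf.emeasure_eq_measure sum_ennreal sum_nonneg)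
  have "summable ?a"
  proof (rule summableI_nonneg_bounded[where x=1])
    show "(\<Sum>k<n. ?a k) \<le> 1" for n
      by (cases n) (simp_all add: lessThan_Suc_atMost flip: partial)
  qed simp
  then show ?thesis
    unfolding partial error_prob_def by (intro sum_le_suminf) auto
qed

lemma nn_integral_uniform_mixture:
  fixes P :: "nat \<Rightarrow> 's pmf" and G :: "nat \<Rightarrow> 's \<Rightarrow> ennreal"
  assumes "n \<noteq> 0"
  shows "(\<integral>\<^sup>+ x. G (fst x) (snd x) \<partial>bind_pmf (pmf_of_set {..<n}) (\<lambda>k. map_pmf (Pair k) (P k)))
           = (\<Sum>k<n. \<integral>\<^sup>+ s. G k s \<partial>P k) / of_nat n"
  using assms by (simp, subst nn_integral_pmf_of_set) auto

lemma mixture_pmf_exists: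
  fixes P :: "nat \<Rightarrow> 's pmf" and ns :: "'s \<Rightarrow> bool" and Z :: "'s \<Rightarrow> 'q"
  assumes pos: "0 < (\<Sum>k<n. measure (P k) {s. ns s})"
  shows "\<exists>pb. set_pmf pb \<subseteq> (\<Union>k<n. Z ` (set_pmf (P k) \<inter> {s. ns s})) \<and>
     (\<forall>F. ennreal (\<Sum>k<n. measure (P k) {s. ns s}) * (\<integral>\<^sup>+ x. F x \<partial>pb) =
          (\<Sum>k<n. \<integral>\<^sup>+ s. (if ns s then F (Z s) else 0) \<partial>P k))"
proof -
  let ?S = "ennreal (\<Sum>k<n. measure (P k) {s. ns s})"
  have n: "n \<noteq> 0" using pos by (intro notI) simp
  have uniform: "set_pmf (pmf_of_set {..<n}) = {..<n}" using n by (intro set_pmf_of_set) auto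
  define J where "J = bind_pmf (pmf_of_set {..<n}) (\<lambda>k. map_pmf (Pair k) (P k))"
  define E :: "(nat \<times> 's) set" where "E = {x. ns (snd x)}"
  note J_integral = nn_integral_uniform_mixture[where P=P, OF n, folded J_def]
  obtain k where k: "k < n" "0 < measure (P k) {s. ns s}"
  proof (rule ccontr)
    assume "\<not> thesis"
    then have "(\<Sum>k<n. measure (P k) {s. ns s}) \<le> 0"
      using that by (intro sum_nonpos) (meson lessThan_iff not_less)
    then show False using pos by simp
  qed
  then obtain s where s: "s \<in> set_pmf (P k)" "ns s"
    by (metis (mono_tags, lifting) measure_Int_set_pmf disjoint_iff
        measure_empty mem_Collect_eq order_less_irrefl)
  then have "(k, s) \<in> set_pmf J \<inter> E" using k by (auto simp: J_def E_def uniform)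
  then have ne: "set_pmf J \<inter> E \<noteq> {}" by blast
  define pb where "pb = map_pmf (\<lambda>x. Z (snd x)) (cond_pmf J E)"
  have "set_pmf pb \<subseteq> (\<Union>k<n. Z ` (set_pmf (P k) \<inter> {s. ns s}))"
    unfolding pb_def set_map_pmf set_cond_pmf[OF ne] by (auto simp: J_def E_def uniform)
  moreover have "?S * (\<integral>\<^sup>+ x. F x \<partial>pb) = (\<Sum>k<n. \<integral>\<^sup>+ s. (if ns s then F (Z s) else 0) \<partial>P k)" for F
  proof -
    have "emeasure J E = (\<Sum>k<n. emeasure (P k) {s. ns s}) / of_nat n"
      using J_integral[of "\<lambda>_ s. indicator {s. ns s} s"]
        by (simp add: E_def indicator_def flip: nn_integral_indicator)
    then have emJ: "emeasure J E = ?S / of_nat n"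
      by (simp add: measure_pmf.emeasure_eq_measure sum_ennreal)
    have "(\<integral>\<^sup>+ x. F x \<partial>pb) = (\<integral>\<^sup>+ x. F (Z (snd x)) * indicator E x \<partial>J) / emeasure J E"
      unfolding pb_def by (simp add: cond_pmf.rep_eq[OF ne] nn_integral_uniform_measure)
    also have "(\<integral>\<^sup>+ x. F (Z (snd x)) * indicator E x \<partial>J) =
        (\<integral>\<^sup>+ x. (if ns (snd x) then F (Z (snd x)) else 0) \<partial>J)"
      by (intro nn_integral_cong) (simp add: E_def)
    also have "\<dots> = (\<Sum>k<n. \<integral>\<^sup>+ s. (if ns s then F (Z s) else 0) \<partial>P k) / of_nat n"
      using J_integral[of "\<lambda>_ s. if ns s then F (Z s) else 0"] by simp
    also have "(\<Sum>k<n. \<integral>\<^sup>+ s. (if ns s then F (Z s) else 0) \<partial>P k) / of_nat n / emeasure J E =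
        (\<Sum>k<n. \<integral>\<^sup>+ s. (if ns s then F (Z s) else 0) \<partial>P k) / ?S"
      unfolding emJ divide_ennreal_def[of _ "of_nat n"]
      using n by (intro divide_mult_eq) (auto simp: ennreal_inverse_positive)
    finally show ?thesis using pos
      by (simp add: ennreal_times_divide mult.commute[of ?S] mult_divide_eq_ennreal)
  qed
  ultimately show ?thesis by blast
qed


subsection \<open>A non-asymptotic lower bound on the expected sample size\<close>

lemma correct_decision_lower:
  "1 - measure (traj_stopped (prob_one \<mu> f m) pol stop n) {s. \<not> stop s} - error_prob \<mu> f pol stop dec m
     \<le> measure (traj_stopped (prob_one \<mu> f m) pol stop n) {s. stop s \<and> dec s = m}"
proof -
  let ?P = "traj_stopped (prob_one \<mu> f m) pol stop n"
  let ?right = "{s. stop s \<and> dec s = m}" and ?cont = "{s. \<not> stop s}" and ?wrong = "{s. stop s \<and> dec s \<noteq> m}"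
  have "measure ?P (?cont \<union> ?wrong) = measure ?P ?cont + measure ?P ?wrong"
    by (rule measure_pmf.finite_measure_Union) auto
  moreover have "measure ?P (?right \<union> (?cont \<union> ?wrong)) = measure ?P ?right + measure ?P (?cont \<union> ?wrong)"
    by (rule measure_pmf.finite_measure_Union) auto
  moreover have "?right \<union> (?cont \<union> ?wrong) = UNIV" by auto
  ultimately have "1 = measure ?P ?right + measure ?P ?cont + measure ?P ?wrong" by simp
  then show ?thesis using stopped_error_le[of \<mu> f m pol stop n dec] by linarith
qed

lemma wrong_decision_upper:
  assumes "m' \<noteq> m"
  shows "measure (traj_stopped (prob_one \<mu> f m') pol stop n) {s. stop s \<and> dec s = m}
           \<le> error_prob \<mu> f pol stop dec m'"
proof -
  have "measure (traj_stopped (prob_one \<mu> f m') pol stop n) {s. stop s \<and> dec s = m}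
      \<le> measure (traj_stopped (prob_one \<mu> f m') pol stop n) {s. stop s \<and> dec s \<noteq> m'}"
    using assms by (intro measure_pmf.finite_measure_mono) auto
  then show ?thesis using stopped_error_le[of \<mu> f m' pol stop n dec] by linarith
qed

lemma two_point_divergence_lower:
  fixes p q a T e :: real
  assumes q: "0 < q" "q \<le> a" and T: "0 \<le> T" "T \<le> ln (1 / a)" "a * T \<le> 1"
    and e: "e * T \<le> 1" and p: "1 - e - a \<le> p" "p \<le> 1" "0 < p"
  shows "T - 4 \<le> p * ln (p / q) - p + q"
proof -
  have "ln (1 / a) \<le> ln (1 / q)" using q by (subst ln_le_cancel_iff) (auto simp: field_simps)
  then have "p * T \<le> p * ln (1 / q)" using T p by (intro mult_left_mono) auto
  moreover have "(1 - e - a) * T \<le> p * T" using p T by (intro mult_right_mono) auto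
  moreover have "p * (1 - 1 / p) \<le> p * ln p"
    using p by (intro mult_left_mono ln_ge_one_minus_inverse) auto
  moreover have "p * (1 - 1 / p) = p - 1" using p by (simp add: field_simps)
  moreover have "p * ln (p / q) = p * ln p + p * ln (1 / q)" using p q
    by (simp add: ln_div algebra_simps)
  ultimately show ?thesis using e T q by (simp add: algebra_simps)
qed

lemma (in kl_pair) stopped_div_lower:
  fixes pol :: "'x hist \<Rightarrow> 'x quant pmf" and stop :: "'x state \<Rightarrow> bool"
    and dec :: "'x state \<Rightarrow> nat" and a e T :: real
  assumes quant: "\<And>h. set_pmf (pol h) \<subseteq> Phi \<mu>" and m': "m' \<noteq> m"
    and err: "error_prob \<mu> f pol stop dec m \<le> a" "error_prob \<mu> f pol stop dec m' \<le> a"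
    and cont: "measure (traj_stopped (prob_one \<mu> f m) pol stop n) {s. \<not> stop s} \<le> e"
    and a: "0 < a" "a \<le> 1/4" and e: "e \<le> 1/2" "e * T \<le> 1"
    and T: "0 \<le> T" "T \<le> ln (1 / a)" "a * T \<le> 1"
  shows "ennreal (T - 4) \<le> msg_test.stopped_div (prob_one \<mu> f m) (prob_one \<mu> f m') pol stop n"
proof -
  interpret T: msg_test "prob_one \<mu> f m" "prob_one \<mu> f m'" "Phi \<mu>" pol by (rule msg_test[OF quant])
  define S where "S = {s. stop s \<and> dec s = m}"
  define p where "p = measure (traj_stopped (prob_one \<mu> f m) pol stop n) S"
  define q where "q = measure (traj_stopped (prob_one \<mu> f m') pol stop n) S"
  have p: "1 - e - a \<le> p" "p \<le> 1" "0 < p"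
    using correct_decision_lower[of \<mu> f m pol stop n dec] err(1) cont e a
    unfolding p_def S_def by auto
  have q: "q \<le> a"
    using wrong_decision_upper[OF m', of \<mu> f pol stop n dec] err(2) unfolding q_def S_def by auto
  have "q \<noteq> 0" using T.traj_stopped_null[of stop n S] p unfolding q_def p_def by auto
  then have q_pos: "0 < q" by (simp add: q_def order_less_le)
  have "T - 4 \<le> p * ln (p / q) - p + q"
    by (rule two_point_divergence_lower[OF q_pos q T e(2) p])
  then have "ennreal (T - 4) \<le> ennreal (p * ln (p / q) - p + q)" by (rule ennreal_leI)
  also have "\<dots> \<le> T.stopped_div stop n"
    using T.stopped_div_ge[of stop n S] p(3) q_pos unfolding p_def q_def by blast
  finally show ?thesis .
qed

locale sensor_model =
  fixes \<mu> :: "'x measure" and f :: "nat \<Rightarrow> 'x \<Rightarrow> real" and M :: nat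
  assumes two_states: "2 \<le> M"
    and pairs: "\<And>m m'. m < M \<Longrightarrow> m' < M \<Longrightarrow> m \<noteq> m' \<Longrightarrow> kl_pair \<mu> f m m'"
begin

definition other :: "nat \<Rightarrow> nat" where
  "other m = (if m = 0 then 1 else 0)"

lemma other: "other m < M" "other m \<noteq> m"
  using two_states by (auto simp: other_def)

lemma kl_pair_other: "m < M \<Longrightarrow> kl_pair \<mu> f m (other m)"
  using pairs[of m "other m"] other[of m] by auto

lemma Imin_bdd:
  assumes m: "m < M"
  shows "bdd_above (Imin M \<mu> f m ` randomized_quantizers \<mu>)"
proof (rule bdd_aboveI2)
  interpret kl_pair \<mu> f m "other m" using kl_pair_other[OF m] by simp
  fix p assume "p \<in> randomized_quantizers \<mu>"
  then have p: "set_pmf p \<subseteq> Phi \<mu>" by (simp add: randomized_quantizers_def)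
  have "Imin M \<mu> f m p \<le> Irand \<mu> f m (other m) p" unfolding Imin_def using other by (intro Min_le) auto
  also have "\<dots> \<le> (\<integral>x. ln (f m x / f (other m) x) \<partial>P)" by (rule Irand_le_kl[OF p])
  finally show "Imin M \<mu> f m p \<le> (\<integral>x. ln (f m x / f (other m) x) \<partial>Qm \<mu> f m)" .
qed

lemma averaged_quantizer:
  fixes pol :: "'x hist \<Rightarrow> 'x quant pmf" and stop :: "'x state \<Rightarrow> bool" and m n :: nat
  defines "w k \<equiv> measure (traj_stopped (prob_one \<mu> f m) pol stop k) {s. \<not> stop s}"
  assumes quant: "\<And>h. set_pmf (pol h) \<subseteq> Phi \<mu>" and m: "m < M" and pos: "0 < (\<Sum>k<n. w k)"
  obtains pb where "pb \<in> randomized_quantizers \<mu>"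
    and "\<And>m'. m' < M \<Longrightarrow> m' \<noteq> m \<Longrightarrow> msg_test.stopped_div (prob_one \<mu> f m) (prob_one \<mu> f m') pol stop n
           = ennreal ((\<Sum>k<n. w k) * Irand \<mu> f m m' pb)"
proof -
  obtain pb where pb: "set_pmf pb
      \<subseteq> (\<Union>k<n. snd ` (set_pmf (traj_stopped (prob_one \<mu> f m) pol stop k) \<inter> {s. \<not> stop s}))"
    and pb_mix: "\<And>F. ennreal (\<Sum>k<n. w k) * (\<integral>\<^sup>+ x. F x \<partial>pb) =
        (\<Sum>k<n. \<integral>\<^sup>+ s. (if \<not> stop s then F (snd s) else 0) \<partial>traj_stopped (prob_one \<mu> f m) pol stop k)"
    using mixture_pmf_exists[where ns="\<lambda>s. \<not> stop s" and Z=snd, OF pos[unfolded w_def]]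
    unfolding w_def by blast
  have pb_Phi: "set_pmf pb \<subseteq> Phi \<mu>"
  proof -
    interpret msg_test "prob_one \<mu> f m" "prob_one \<mu> f (other m)" "Phi \<mu>" pol
      using kl_pair.msg_test[OF kl_pair_other[OF m] quant] .
    show ?thesis using pb traj_stopped_quantizer by blast
  qed
  moreover have "msg_test.stopped_div (prob_one \<mu> f m) (prob_one \<mu> f m') pol stop n
      = ennreal ((\<Sum>k<n. w k) * Irand \<mu> f m m' pb)" if m': "m' < M" "m' \<noteq> m" for m'
  proof -
    interpret kl_pair \<mu> f m m' using pairs[OF m m'(1) m'(2)[symmetric]] .
    have "msg_test.stopped_div (prob_one \<mu> f m) (prob_one \<mu> f m') pol stop n
        = ennreal (\<Sum>k<n. w k) * ennreal (Irand \<mu> f m m' pb)"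
      unfolding stopped_div_eq[OF quant] Irand_nn_integral[OF pb_Phi, symmetric] pb_mix
      by (intro sum.cong refl nn_integral_cong) simp
    then show ?thesis using pos by (simp add: ennreal_mult')
  qed
  ultimately show ?thesis using that by (simp add: randomized_quantizers_def)
qed

text \<open>Taking for m' the state hardest to distinguish from m under the averaged quantizer,
  the divergence at time min N n is at most E_m[min N n] times the maximin information.\<close>
lemma stopped_div_le_maximin:
  fixes pol :: "'x hist \<Rightarrow> 'x quant pmf" and stop :: "'x state \<Rightarrow> bool" and n :: nat
  assumes quant: "\<And>h. set_pmf (pol h) \<subseteq> Phi \<mu>" and m: "m < M"
  defines "w k \<equiv> measure (traj_stopped (prob_one \<mu> f m) pol stop k) {s. \<not> stop s}"
  shows "\<exists>m'<M. m' \<noteq> m \<and> msg_test.stopped_div (prob_one \<mu> f m) (prob_one \<mu> f m') pol stop n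
           \<le> ennreal ((\<Sum>k<n. w k) * Imaximin M \<mu> f m)"
proof (cases "(\<Sum>k<n. w k) = 0")
  case True
  have "w k = 0" if "k < n" for k
    using True that by (subst (asm) sum_nonneg_eq_0_iff) (auto simp: w_def)
  then have AE_stop: "AE s in traj_stopped (prob_one \<mu> f m) pol stop k. stop s" if "k < n" for k
    using that by (intro AE_I[where N="{s. \<not> stop s}"]) (auto simp: w_def measure_pmf.emeasure_eq_measure)
  then have "(\<integral>\<^sup>+ s. (if stop s then 0 else ennreal (Idet \<mu> f m (other m) (snd s)))
      \<partial>traj_stopped (prob_one \<mu> f m) pol stop k) = 0" if "k < n" for k
    using AE_stop[OF that] by (subst nn_integral_0_iff_AE) (auto elim!: eventually_mono)
  then have "msg_test.stopped_div (prob_one \<mu> f m) (prob_one \<mu> f (other m)) pol stop n = 0"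
    unfolding kl_pair.stopped_div_eq[OF kl_pair_other[OF m] quant] by simp
  then show ?thesis using other by (intro exI[of _ "other m"]) simp
next
  case False
  then have pos: "0 < (\<Sum>k<n. w k)" by (simp add: w_def order_less_le sum_nonneg)
  obtain pb where pb: "pb \<in> randomized_quantizers \<mu>"
    and div_eq: "\<And>m'. m' < M \<Longrightarrow> m' \<noteq> m \<Longrightarrow> msg_test.stopped_div (prob_one \<mu> f m) (prob_one \<mu> f m') pol stop n
           = ennreal ((\<Sum>k<n. w k) * Irand \<mu> f m m' pb)"
    using averaged_quantizer[OF quant m pos[unfolded w_def]] unfolding w_def by blast
  obtain m' where m': "m' < M" "m' \<noteq> m" and Im': "Irand \<mu> f m m' pb = Imin M \<mu> f m pb"
  proof -
    have "Imin M \<mu> f m pb \<in> (\<lambda>m'. Irand \<mu> f m m' pb) ` {m'. m' < M \<and> m' \<noteq> m}"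
      unfolding Imin_def using other by (intro Min_in) auto
    then show ?thesis using that by auto
  qed
  moreover have "Imin M \<mu> f m pb \<le> Imaximin M \<mu> f m"
    unfolding Imaximin_def by (rule cSUP_upper[OF pb Imin_bdd[OF m]])
  ultimately show ?thesis
    using div_eq pos by (intro exI[of _ m']) (auto intro!: ennreal_leI mult_left_mono)
qed

text \<open>If every error probability is at most a, then E_m[N] \<ge> (T - 4)/I(m) for every
  T \<le> ln(1/a) with a T \<le> 1: choose n with P_m(N > n) small, compare the laws of the
  information at time min N n under m and the hardest alternative m', and use the
  event "stopped and decided m".\<close>
lemma expected_N_lower_bound:
  fixes pol :: "'x hist \<Rightarrow> 'x quant pmf" and stop :: "'x state \<Rightarrow> bool"
    and dec :: "'x state \<Rightarrow> nat" and a T :: real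
  assumes quant: "\<And>h. set_pmf (pol h) \<subseteq> Phi \<mu>" and m: "m < M"
    and I_pos: "0 < Imaximin M \<mu> f m"
    and err: "\<And>m'. m' < M \<Longrightarrow> error_prob \<mu> f pol stop dec m' \<le> a"
    and a: "0 < a" "a \<le> 1/4" and T: "0 \<le> T" "T \<le> ln (1 / a)" "a * T \<le> 1"
  shows "ennreal ((T - 4) / Imaximin M \<mu> f m) \<le> expected_N \<mu> f pol stop m"
proof (cases "expected_N \<mu> f pol stop m = \<top>")
  case False
  define I where "I = Imaximin M \<mu> f m"
  define w where "w k = measure (traj_stopped (prob_one \<mu> f m) pol stop k) {s. \<not> stop s}" for k
  have E_eq: "expected_N \<mu> f pol stop m = (\<Sum>k. ennreal (w k))"
    unfolding w_def by (rule expected_N_eq)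
  have w_nonneg: "0 \<le> w k" for k by (simp add: w_def)
  have summable: "summable w"
    using False unfolding E_eq by (intro summable_suminf_not_top w_nonneg)
  define e where "e = 1 / (2 * (T + 1))"
  have e: "0 < e" "e * T \<le> 1" "e \<le> 1/2" using T by (auto simp: e_def field_simps)
  obtain n where wn: "w n < e"
    using order_tendstoD(2)[OF summable_LIMSEQ_zero[OF summable] e(1)]
      by (auto simp: eventually_sequentially)
  define En where "En = (\<Sum>k<n. w k)"
  have En_nonneg: "0 \<le> En" unfolding En_def by (intro sum_nonneg w_nonneg)
  have En_le: "ennreal En \<le> expected_N \<mu> f pol stop m"
    unfolding E_eq suminf_ennreal2[OF w_nonneg summable] En_def
    by (intro ennreal_leI sum_le_suminf[OF summable]) (auto simp: w_nonneg)
  obtain m' where m': "m' < M" "m' \<noteq> m"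
    and div_le: "msg_test.stopped_div (prob_one \<mu> f m) (prob_one \<mu> f m') pol stop n \<le> ennreal (En * I)"
    using stopped_div_le_maximin[where pol=pol and stop=stop and n=n, OF quant m]
      by (auto simp: En_def w_def I_def)
  interpret kl_pair \<mu> f m m' using pairs[OF m m'(1) m'(2)[symmetric]] .
  have "ennreal (T - 4) \<le> ennreal (En * I)"
    using stopped_div_lower[OF quant m'(2) err[OF m] err[OF m'(1)] _ a _ e(2) T] wn e(3) div_le
    unfolding w_def by (blast intro: order_trans less_imp_le)
  then have "T - 4 \<le> En * I"
    using En_nonneg I_pos by (simp add: I_def ennreal_le_iff)
  then have "(T - 4) / I \<le> En" using I_pos by (simp add: I_def divide_le_eq)
  then show ?thesis using En_le unfolding I_def by (blast intro: ennreal_leI order_trans)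
qed simp

end

subsection \<open>Asymptotics as c tends to 0\<close>

lemma bigO_uniform_finite:
  fixes g :: "nat \<Rightarrow> 'a \<Rightarrow> real" and h :: "'a \<Rightarrow> real"
  assumes "\<And>m. m < M \<Longrightarrow> g m \<in> O[F](h)"
  shows "\<exists>K\<ge>1. \<forall>\<^sub>F c in F. \<forall>m<M. norm (g m c) \<le> K * norm (h c)"
proof -
  have "\<forall>m. \<exists>k. m < M \<longrightarrow> 0 < k \<and> (\<forall>\<^sub>F c in F. norm (g m c) \<le> k * norm (h c))"
    using assms by (metis landau_o.bigE)
  then obtain k where k: "\<And>m. m < M \<Longrightarrow> 0 < k m \<and> (\<forall>\<^sub>F c in F. norm (g m c) \<le> k m * norm (h c))"
    by metis
  define K where "K = 1 + (\<Sum>m<M. k m)"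
  have k_le: "k m \<le> K" if "m < M" for m
  proof -
    have "k m \<le> (\<Sum>m<M. k m)" using that k by (intro member_le_sum) (auto intro: less_imp_le)
    then show ?thesis by (simp add: K_def)
  qed
  have "0 \<le> (\<Sum>m<M. k m)" using k by (intro sum_nonneg) (auto intro: less_imp_le)
  then have "1 \<le> K" by (simp add: K_def)
  moreover have "\<forall>\<^sub>F c in F. \<forall>m\<in>{..<M}. norm (g m c) \<le> K * norm (h c)"
  proof (subst eventually_ball_finite_distrib, simp, intro ballI)
    fix m assume "m \<in> {..<M}"
    then have ev: "\<forall>\<^sub>F c in F. norm (g m c) \<le> k m * norm (h c)" and km: "k m \<le> K"
      using k k_le by auto
    show "\<forall>\<^sub>F c in F. norm (g m c) \<le> K * norm (h c)"
      using ev by (rule eventually_mono) (use km in \<open>meson norm_ge_zero mult_right_mono order_trans\<close>)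
  qed
  ultimately show ?thesis by (intro exI[of _ K] conjI) (auto elim!: eventually_mono)
qed

text \<open>For small c the choice a = K c |ln c| and T = |ln c| - ln |ln c| - ln K meets the
  hypotheses of the non-asymptotic bound.\<close>
lemma small_c_parameters:
  fixes K :: real assumes K: "1 \<le> K"
  shows "\<forall>\<^sub>F c in at_right 0. 0 < c \<and> 0 < K * c * \<bar>ln c\<bar> \<and> K * c * \<bar>ln c\<bar> \<le> 1/4 \<and>
           4 \<le> \<bar>ln c\<bar> - ln \<bar>ln c\<bar> - ln K \<and>
           \<bar>ln c\<bar> - ln \<bar>ln c\<bar> - ln K \<le> ln (1 / (K * c * \<bar>ln c\<bar>)) \<and>
           K * c * \<bar>ln c\<bar> * (\<bar>ln c\<bar> - ln \<bar>ln c\<bar> - ln K) \<le> 1"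
proof -
  have "\<forall>\<^sub>F c in at_right (0::real). 0 < c" by (rule eventually_at_right_less)
  moreover have "\<forall>\<^sub>F c in at_right (0::real). c < exp (-1)"
    using order_tendstoD(2)[OF tendsto_ident_at[where a="0::real" and s="{0<..}"], of "exp (-1)"]
      by simp
  moreover have "filterlim (\<lambda>c::real. - ln c - ln (- ln c)) at_top (at_right 0)" by real_asymp
  then have "\<forall>\<^sub>F c in at_right (0::real). ln K + 4 \<le> - ln c - ln (- ln c)"
    by (simp add: filterlim_at_top)
  moreover have "\<forall>\<^sub>F c in at_right (0::real). c * (- ln c) < 1 / (4 * K)"
    using K by (intro order_tendstoD(2)[of _ 0]) (real_asymp, simp)
  moreover have "\<forall>\<^sub>F c in at_right (0::real). c * (ln c)^2 < 1 / K"
    using K by (intro order_tendstoD(2)[of _ 0]) (real_asymp, simp)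
  ultimately show ?thesis
  proof eventually_elim
    case (elim c)
    define lc where "lc = - ln c"
    have "ln c < ln (exp (-1))" using elim by (subst ln_less_cancel_iff) auto
    then have lc: "1 < lc" "\<bar>ln c\<bar> = lc" by (auto simp: lc_def)
    have a_pos: "0 < K * c * lc" using K elim lc by simp
    have "K * (c * lc) < K * (1 / (4 * K))"
      using elim K by (intro mult_strict_left_mono) (auto simp: lc_def)
    then have a_small: "K * c * lc \<le> 1/4" using K by (simp add: mult.assoc)
    have "ln (K * c * lc) = ln K + ln c + ln lc" using K elim lc by (simp add: ln_mult_pos)
    moreover have "ln (1 / (K * c * lc)) = - ln (K * c * lc)" using a_pos K elim lc
      by (simp add: ln_div)
    ultimately have T_le: "lc - ln lc - ln K \<le> ln (1 / (K * c * lc))" by (simp add: lc_def)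
    have "K * c * lc * (lc - ln lc - ln K) \<le> K * c * lc * lc"
    proof (rule mult_left_mono)
      have "0 \<le> ln lc" "0 \<le> ln K" using lc(1) K by simp_all
      then show "lc - ln lc - ln K \<le> lc" by simp
    qed (use a_pos in simp)
    also have "\<dots> = K * (c * (ln c)^2)" by (simp add: lc_def power2_eq_square)
    also have "\<dots> \<le> K * (1 / K)" using elim K by (intro mult_left_mono) auto
    finally have "K * c * lc * (lc - ln lc - ln K) \<le> 1" using K by simp
    then show ?case using elim a_pos a_small T_le lc by (simp add: lc_def)
  qed
qed

context sensor_model
begin

lemma expected_N_asymptotic:
  fixes pol :: "real \<Rightarrow> 'x hist \<Rightarrow> 'x quant pmf" and stop :: "real \<Rightarrow> 'x state \<Rightarrow> bool"
    and dec :: "real \<Rightarrow> 'x state \<Rightarrow> nat" and K :: real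
  assumes quantizers: "\<forall>c>0. \<forall>h. set_pmf (pol c h) \<subseteq> Phi \<mu>" and m: "m < M" and K: "1 \<le> K"
    and err: "\<forall>\<^sub>F c in at_right 0. \<forall>m'<M.
                norm (error_prob \<mu> f (pol c) (stop c) (dec c) m') \<le> K * norm (c * \<bar>ln c\<bar>)"
  shows "\<forall>\<^sub>F c in at_right 0. ennreal ((\<bar>ln c\<bar> - ln \<bar>ln c\<bar> - (ln K + 4)) / Imaximin M \<mu> f m)
           \<le> expected_N \<mu> f (pol c) (stop c) m"
  using err small_c_parameters[OF K]
proof eventually_elim
  case (elim c)
  define a where "a = K * c * \<bar>ln c\<bar>"
  define T where "T = \<bar>ln c\<bar> - ln \<bar>ln c\<bar> - ln K"
  have err_a: "error_prob \<mu> f (pol c) (stop c) (dec c) m' \<le> a" if "m' < M" for m'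
  proof -
    have "\<bar>error_prob \<mu> f (pol c) (stop c) (dec c) m'\<bar> \<le> K * (c * \<bar>ln c\<bar>)"
      using elim that by (simp add: abs_mult)
    then show ?thesis by (simp add: a_def mult.assoc)
  qed
  have quant: "set_pmf (pol c h) \<subseteq> Phi \<mu>" for h using quantizers elim by auto
  have "ennreal ((T - 4) / Imaximin M \<mu> f m) \<le> expected_N \<mu> f (pol c) (stop c) m"
  proof (cases "0 < Imaximin M \<mu> f m")
    case True
    show ?thesis
      by (rule expected_N_lower_bound[OF quant m True err_a]) (use elim in \<open>auto simp: a_def T_def\<close>)
  next
    case False
    then have "ennreal ((T - 4) / Imaximin M \<mu> f m) = 0"
      using elim by (intro ennreal_neg) (simp add: T_def divide_nonneg_nonpos)
    then show ?thesis by simp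
  qed
  then show ?case by (simp add: T_def algebra_simps)
qed

end

text \<open>The main theorem: with K a common constant in the error bounds, the claim holds
  with C = ln K + 4.\<close>
theorem theorem4p2:
  fixes \<mu> :: "'x measure" and f :: "nat \<Rightarrow> 'x \<Rightarrow> real" and M :: nat
    and pol :: "real \<Rightarrow> 'x hist \<Rightarrow> 'x quant pmf"
    and stop :: "real \<Rightarrow> 'x state \<Rightarrow> bool"
    and dec :: "real \<Rightarrow> 'x state \<Rightarrow> nat"
  assumes M2: "2 \<le> M"
    and sigma: "sigma_finite_measure \<mu>"
    and dens: "\<forall>m<M. f m \<in> borel_measurable \<mu> \<and> (\<forall>x\<in>space \<mu>. 0 \<le> f m x) \<and> prob_space (Qm \<mu> f m)"
    and standing: "\<forall>m<M. \<forall>m'<M. m \<noteq> m' \<longrightarrow>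
        (AE x in Qm \<mu> f m. 0 < f m' x) \<and>
        integrable (Qm \<mu> f m) (\<lambda>x. ln (f m x / f m' x)) \<and>
        0 < (\<integral>x. ln (f m x / f m' x) \<partial>Qm \<mu> f m)"
    and quantizers: "\<forall>c>0. \<forall>h. set_pmf (pol c h) \<subseteq> Phi \<mu>"
    and decisions: "\<forall>c>0. \<forall>s. dec c s < M"
    and err: "\<forall>m<M. (\<lambda>c. error_prob \<mu> f (pol c) (stop c) (dec c) m) \<in> O[at_right 0](\<lambda>c. c * \<bar>ln c\<bar>)"
  shows "\<forall>m<M. \<exists>C::real. \<forall>\<^sub>F c in at_right 0.
           ennreal ((\<bar>ln c\<bar> - ln \<bar>ln c\<bar> - C) / Imaximin M \<mu> f m)
             \<le> expected_N \<mu> f (pol c) (stop c) m"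
proof (intro allI impI)
  fix m assume m: "m < M"
  have "kl_pair \<mu> f m1 m2" if "m1 < M" "m2 < M" "m1 \<noteq> m2" for m1 m2
    unfolding kl_pair_def using dens standing that by auto
  then interpret sensor_model \<mu> f M using M2 by (simp add: sensor_model_def)
  obtain K where K: "1 \<le> K" and err_K: "\<forall>\<^sub>F c in at_right 0. \<forall>m'<M.
      norm (error_prob \<mu> f (pol c) (stop c) (dec c) m') \<le> K * norm (c * \<bar>ln c\<bar>)"
    using bigO_uniform_finite[where g="\<lambda>m c. error_prob \<mu> f (pol c) (stop c) (dec c) m"] err by blast
  show "\<exists>C::real. \<forall>\<^sub>F c in at_right 0. ennreal ((\<bar>ln c\<bar> - ln \<bar>ln c\<bar> - C) / Imaximin M \<mu> f m)
          \<le> expected_N \<mu> f (pol c) (stop c) m"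
    using expected_N_asymptotic[OF quantizers m K err_K] by blast
qed

end
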